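(* Let $(\mathbf{P},d_{\mathbf{P}})$ be a finite metric poset and $M,N$ be $\mathbf{P}$-modules. If there exists a Galois coupling of $(M,N)$, then $\mathsf{Res}(P^M_\bullet,P^N_\bullet)\neq\varnothing$; moreover there exists $(E_\bullet,F_\bullet)\in\mathsf{Res}(P^M_\bullet,P^N_\bullet)$ admitting at least one matching.
   Context: Fix a field $k$; a finite poset is a category with a unique morphism $x\to y$ iff $x\le y$; a $\mathbf{P}$-module is a functor $\mathbf{P}\to$ (finite-dimensional $k$-vector spaces); $g^*$ is precomposition with a monotone map $g$. A Galois insertion $f:\mathbf{Q}\rightleftarrows\mathbf{P}:g$ consists of monotone maps with $f(u)\le x\iff u\le g(x)$ and $f\circ g=\mathrm{id}_{\mathbf{P}}$. A Galois coupling of $(M,N)$ is $(\mathbf{Q},f\dashv g,h\dashv i,\Gamma)$ with $\mathbf{Q}$ a finite poset, $f:\mathbf{Q}\rightleftarrows\mathbf{P}:g$, $h:\mathbf{Q}\rightleftarrows\mathbf{P}:i$ Galois insertions and a $\mathbf{Q}$-module $\Gamma$ with $g^*\Gamma\cong M$, $i^*\Gamma\cong N$. For $x\in\mathbf{P}$, $k[\mathbf{P}]_x$ is the module with value $k$ at $y\ge x$, $0$ elsewhere, identity maps (the indecomposable projectives). For $y\le x$, $\rho(x\ge y):k[\mathbf{P}]_x\to k[\mathbf{P}]_y$ is the canonical morphism (identity at each $z\ge x$), $0$ otherwise. For projectives with fixed decompositions $E=\bigoplus_{x\in\mathrm{smd}(E)}k[\mathbf{P}]_x$, $F=\bigoplus_{y\in\mathrm{smd}(F)}k[\mathbf{P}]_y$,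 each $\alpha:E\to F$ is uniquely $[a_{x,y}\rho(x\ge y)]$ with $a_{x,y}=0$ unless $x\ge y$; $\mathrm{Mat}(\alpha)=[a_{x,y}]$. Projective resolutions $E_\bullet=(E_i,\partial_i:E_{i+1}\to E_i)_{i\ge0}$ are taken with fixed decompositions of their terms, $|E_i|$ being the number of summands; $P^M_\bullet$ is a minimal projective resolution of $M$. $\mathsf{Res}(P^M_\bullet,P^N_\bullet)$ is the set of pairs $(E_\bullet,F_\bullet)$ of projective resolutions of $M$ and $N$ with $|E_i|=|F_i|$ for all $i$. A matching of $(E_\bullet,F_\bullet)$ is a family of bijections $B_i:\mathrm{smd}(E_i)\to\mathrm{smd}(F_i)$ such that the $(x',x)$-entry of $\mathrm{Mat}(\partial^E_i)$ equals the $(B_{i+1}(x'),B_i(x))$-entry of $\mathrm{Mat}(\partial^F_i)$ for all $i$, $x\in\mathrm{smd}(E_i)$, $x'\in\mathrm{smd}(E_{i+1})$. *)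

theory Defs
  imports "Jordan_Normal_Form.Matrix"
begin

definition finite_poset :: "'a set \<Rightarrow> ('a \<Rightarrow> 'a \<Rightarrow> bool) \<Rightarrow> bool" where
  "finite_poset X lep \<longleftrightarrow> finite X \<and> (\<forall>x\<in>X. lep x x)
     \<and> (\<forall>x\<in>X. \<forall>y\<in>X. lep x y \<and> lep y x \<longrightarrow> x = y)
     \<and> (\<forall>x\<in>X. \<forall>y\<in>X. \<forall>z\<in>X. lep x y \<and> lep y z \<longrightarrow> lep x z)"

definition monotone_betw :: "'a set \<Rightarrow> ('a \<Rightarrow> 'a \<Rightarrow> bool) \<Rightarrow> 'b set \<Rightarrow> ('b \<Rightarrow> 'b \<Rightarrow> bool)
    \<Rightarrow> ('a \<Rightarrow> 'b) \<Rightarrow> bool" where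
  "monotone_betw X leX Y leY f \<longleftrightarrow> f ` X \<subseteq> Y \<and> (\<forall>x\<in>X. \<forall>y\<in>X. leX x y \<longrightarrow> leY (f x) (f y))"

definition galois_insertion :: "'q set \<Rightarrow> ('q \<Rightarrow> 'q \<Rightarrow> bool) \<Rightarrow> 'p set \<Rightarrow> ('p \<Rightarrow> 'p \<Rightarrow> bool)
    \<Rightarrow> ('q \<Rightarrow> 'p) \<Rightarrow> ('p \<Rightarrow> 'q) \<Rightarrow> bool" where
  "galois_insertion Q leQ P leP f g \<longleftrightarrow>
     monotone_betw Q leQ P leP f \<and> monotone_betw P leP Q leQ g
     \<and> (\<forall>u\<in>Q. \<forall>x\<in>P. leP (f u) x \<longleftrightarrow> leQ u (g x))
     \<and> (\<forall>x\<in>P. f (g x) = x)"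

(* A module over a poset: a functor into finite-dimensional k-vector spaces, each
   vector space being represented (up to isomorphism) by k^(dim x), and each
   structure map M(x \<lep> y) by a (dim y) x (dim x) matrix. *)
type_synonym ('a, 'k) pmod = "('a \<Rightarrow> nat) \<times> ('a \<Rightarrow> 'a \<Rightarrow> 'k mat)"

definition is_pmod :: "'a set \<Rightarrow> ('a \<Rightarrow> 'a \<Rightarrow> bool) \<Rightarrow> ('a, 'k::field) pmod \<Rightarrow> bool" where
  "is_pmod X lep M \<longleftrightarrow>
     (\<forall>x\<in>X. \<forall>y\<in>X. lep x y \<longrightarrow> snd M x y \<in> carrier_mat (fst M y) (fst M x))
     \<and> (\<forall>x\<in>X. snd M x x = 1\<^sub>m (fst M x))
     \<and> (\<forall>x\<in>X. \<forall>y\<in>X. \<forall>z\<in>X. lep x y \<and> lep y z \<longrightarrow> snd M x z = snd M y z * snd M x y)"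

definition pullback :: "('p \<Rightarrow> 'q) \<Rightarrow> ('q, 'k) pmod \<Rightarrow> ('p, 'k) pmod" where
  "pullback g G = (\<lambda>x. fst G (g x), \<lambda>x y. snd G (g x) (g y))"

definition pmod_iso :: "'a set \<Rightarrow> ('a \<Rightarrow> 'a \<Rightarrow> bool) \<Rightarrow> ('a, 'k::field) pmod \<Rightarrow> ('a, 'k) pmod \<Rightarrow> bool" where
  "pmod_iso X lep M N \<longleftrightarrow> (\<exists>\<phi>.
     (\<forall>x\<in>X. \<phi> x \<in> carrier_mat (fst N x) (fst M x) \<and> invertible_mat (\<phi> x))
     \<and> (\<forall>x\<in>X. \<forall>y\<in>X. lep x y \<longrightarrow> \<phi> y * snd M x y = snd N x y * \<phi> x))"

(* Galois coupling of (M,N); the finite poset Q is taken with carrier a subset of nat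
   (every finite poset is isomorphic to such a one). *)
definition galois_coupling_exists :: "'p set \<Rightarrow> ('p \<Rightarrow> 'p \<Rightarrow> bool) \<Rightarrow> ('p, 'k::field) pmod
    \<Rightarrow> ('p, 'k) pmod \<Rightarrow> bool" where
  "galois_coupling_exists P lep M N \<longleftrightarrow>
    (\<exists>(Q :: nat set) leQ f g h i \<Gamma>.
       finite_poset Q leQ
       \<and> galois_insertion Q leQ P lep f g
       \<and> galois_insertion Q leQ P lep h i
       \<and> is_pmod Q leQ \<Gamma>
       \<and> pmod_iso P lep (pullback g \<Gamma>) M
       \<and> pmod_iso P lep (pullback i \<Gamma>) N)"

(* A projective with fixed decomposition \<Oplus>_j k[P]_(xs!j) is given by the list xs of
   its summands.  Its value at y has basis the indices j with xs!j \<lep> y. *)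
definition active :: "('a \<Rightarrow> 'a \<Rightarrow> bool) \<Rightarrow> 'a list \<Rightarrow> 'a \<Rightarrow> nat list" where
  "active lep xs y = filter (\<lambda>j. lep (xs ! j) y) [0..<length xs]"

(* structure map of \<Oplus>_j k[P]_(xs!j) from y to z (y \<lep> z): identity on each summand *)
definition proj_struct :: "('a \<Rightarrow> 'a \<Rightarrow> bool) \<Rightarrow> 'a list \<Rightarrow> 'a \<Rightarrow> 'a \<Rightarrow> 'k::field mat" where
  "proj_struct lep xs y z = mat (length (active lep xs z)) (length (active lep xs y))
     (\<lambda>(r, c). if active lep xs z ! r = active lep xs y ! c then 1 else 0)"

(* the component at y of the morphism \<Oplus>_j' k[P]_(xs'!j') \<rightarrow> \<Oplus>_j k[P]_(xs!j) with
   Mat = A = [a_(j',j)], i.e. the morphism [a_(j',j) \<rho>(xs'!j' \<ge> xs!j)] *)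
definition mat_morph_at :: "('a \<Rightarrow> 'a \<Rightarrow> bool) \<Rightarrow> 'a list \<Rightarrow> 'a list \<Rightarrow> 'k::field mat \<Rightarrow> 'a \<Rightarrow> 'k mat" where
  "mat_morph_at lep xs' xs A y = mat (length (active lep xs y)) (length (active lep xs' y))
     (\<lambda>(r, c). A $$ (active lep xs' y ! c, active lep xs y ! r))"

definition exact_at :: "nat \<Rightarrow> nat \<Rightarrow> nat \<Rightarrow> 'k::field mat \<Rightarrow> 'k mat \<Rightarrow> bool" where
  "exact_at u v w B A \<longleftrightarrow>
     (\<forall>x\<in>carrier_vec v. A *\<^sub>v x = 0\<^sub>v w \<longleftrightarrow> (\<exists>z\<in>carrier_vec u. x = B *\<^sub>v z))"

(* (E, Mat(\<partial>^E)) is a projective resolution of M: E i is the list of summands of E_i,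
   D i = Mat(\<partial>_i) with rows indexed by smd(E_(i+1)) and columns by smd(E_i);
   there is an augmentation E_0 \<rightarrow> M making ... \<rightarrow> E_1 \<rightarrow> E_0 \<rightarrow> M \<rightarrow> 0 exact. *)
definition is_proj_res :: "'a set \<Rightarrow> ('a \<Rightarrow> 'a \<Rightarrow> bool) \<Rightarrow> ('a, 'k::field) pmod
    \<Rightarrow> (nat \<Rightarrow> 'a list) \<Rightarrow> (nat \<Rightarrow> 'k mat) \<Rightarrow> bool" where
  "is_proj_res X lep M E D \<longleftrightarrow>
     (\<forall>i. set (E i) \<subseteq> X)
     \<and> (\<forall>i. D i \<in> carrier_mat (length (E (Suc i))) (length (E i)))
     \<and> (\<forall>i. \<forall>r < length (E (Suc i)). \<forall>c < length (E i).
          \<not> lep (E i ! c) (E (Suc i) ! r) \<longrightarrow> D i $$ (r, c) = 0)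
     \<and> (\<exists>\<epsilon>.
          (\<forall>y\<in>X. \<epsilon> y \<in> carrier_mat (fst M y) (length (active lep (E 0) y)))
        \<and> (\<forall>y\<in>X. \<forall>z\<in>X. lep y z \<longrightarrow> \<epsilon> z * proj_struct lep (E 0) y z = snd M y z * \<epsilon> y)
        \<and> (\<forall>y\<in>X. \<forall>v\<in>carrier_vec (fst M y).
              \<exists>x\<in>carrier_vec (length (active lep (E 0) y)). \<epsilon> y *\<^sub>v x = v)
        \<and> (\<forall>y\<in>X. exact_at (length (active lep (E 1) y)) (length (active lep (E 0) y)) (fst M y)
              (mat_morph_at lep (E 1) (E 0) (D 0) y) (\<epsilon> y))
        \<and> (\<forall>y\<in>X. \<forall>i. exact_at (length (active lep (E (Suc (Suc i))) y))
              (length (active lep (E (Suc i)) y)) (length (active lep (E i) y))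
              (mat_morph_at lep (E (Suc (Suc i))) (E (Suc i)) (D (Suc i)) y)
              (mat_morph_at lep (E (Suc i)) (E i) (D i) y)))"

definition Res :: "'a set \<Rightarrow> ('a \<Rightarrow> 'a \<Rightarrow> bool) \<Rightarrow> ('a, 'k::field) pmod \<Rightarrow> ('a, 'k) pmod
    \<Rightarrow> (((nat \<Rightarrow> 'a list) \<times> (nat \<Rightarrow> 'k mat)) \<times> ((nat \<Rightarrow> 'a list) \<times> (nat \<Rightarrow> 'k mat))) set" where
  "Res X lep M N = {((E, DE), (F, DF)). is_proj_res X lep M E DE \<and> is_proj_res X lep N F DF
      \<and> (\<forall>i. length (E i) = length (F i))}"

definition has_matching :: "(nat \<Rightarrow> 'a list) \<Rightarrow> (nat \<Rightarrow> 'k mat) \<Rightarrow> (nat \<Rightarrow> 'a list) \<Rightarrow> (nat \<Rightarrow> 'k mat) \<Rightarrow> bool" where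
  "has_matching E DE F DF \<longleftrightarrow> (\<exists>B :: nat \<Rightarrow> nat \<Rightarrow> nat.
     (\<forall>i. bij_betw (B i) {..<length (E i)} {..<length (F i)})
     \<and> (\<forall>i. \<forall>c < length (E i). \<forall>r < length (E (Suc i)).
          DE i $$ (r, c) = DF i $$ (B (Suc i) r, B i c)))"

end

theory Submission
  imports Defs
begin

text \<open>
  For a Galois connection \<open>f \<stileturn> g\<close> from \<open>Q\<close> to \<open>P\<close> we have \<open>u \<le> g x \<longleftrightarrow> f u \<le> x\<close>, so pulling
  back along \<open>g\<close> turns the projective \<open>k[Q]\<^sub>u\<close> into \<open>k[P]\<^bsub>f u\<^esub>\<close>, and it is exact. Hence a
  projective resolution of \<open>\<Gamma>\<close> with summands \<open>u\<^sub>j\<close> and matrices \<open>D\<^sub>i\<close> pulls back to a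
  projective resolution of \<open>g\<^sup>*\<Gamma> \<cong> M\<close> with summands \<open>f u\<^sub>j\<close> and the same matrices \<open>D\<^sub>i\<close>;
  likewise along \<open>h \<stileturn> i\<close> for \<open>N\<close>. Both resolutions have the matrices \<open>D\<^sub>i\<close>, so the identity
  bijections form a matching.

  Since no minimality is required, a resolution of \<open>\<Gamma>\<close> over the finite poset \<open>Q\<close> is built
  stage by stage from sums of copies of all the \<open>k[Q]\<^sub>y\<close>: the generators of the copies of
  \<open>k[Q]\<^sub>y\<close> are sent to a spanning set of \<open>\<Gamma>(y)\<close> at the first stage, and to a spanning set of
  the kernel at \<open>y\<close> (the columns of a square matrix with that image) at the later stages.
\<close>

lemma mult_mat_vec_index_sum:
  "i < dim_row A \<Longrightarrow> dim_vec v = dim_col A \<Longrightarrow> (A *\<^sub>v v) $ i = (\<Sum>j<dim_col A. A $$ (i, j) * v $ j)"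
  by (auto simp: scalar_prod_def row_def lessThan_atLeast0 intro!: sum.cong)

lemma mult_mat_vec_unit_vec_index:
  "(A :: 'a::semiring_1 mat) \<in> carrier_mat p q \<Longrightarrow> c < q \<Longrightarrow> i < p \<Longrightarrow> (A *\<^sub>v unit_vec q c) $ i = A $$ (i, c)"
  by simp

lemma zero_mat_mult_vec: "v \<in> carrier_vec q \<Longrightarrow> 0\<^sub>m p q *\<^sub>v v = (0\<^sub>v p :: 'a::semiring_0 vec)"
  by (intro eq_vecI) simp_all

lemma mat_eq_unit_vecI:
  fixes A B :: "'k::field mat"
  assumes "A \<in> carrier_mat p q" "B \<in> carrier_mat p q"
    and "\<And>c. c < q \<Longrightarrow> A *\<^sub>v unit_vec q c = B *\<^sub>v unit_vec q c"
  shows "A = B"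
proof (rule eq_matI)
  fix i j assume "i < dim_row B" "j < dim_col B"
  then have i: "i < p" and j: "j < q" using assms by auto
  then show "A $$ (i, j) = B $$ (i, j)"
    using assms(3)[OF j] mult_mat_vec_unit_vec_index[OF assms(1) j i]
      mult_mat_vec_unit_vec_index[OF assms(2) j i] by simp
qed (use assms in auto)

lemma mat_eq_mult_vecI:
  fixes A B :: "'k::field mat"
  assumes "A \<in> carrier_mat p q" "B \<in> carrier_mat p q"
    and "\<And>v. v \<in> carrier_vec q \<Longrightarrow> A *\<^sub>v v = B *\<^sub>v v"
  shows "A = B"
  using assms by (intro mat_eq_unit_vecI) auto

section \<open>Coordinates on sums of indecomposable projectives\<close>

lemma set_active: "set (active lep xs y) = {j. j < length xs \<and> lep (xs ! j) y}"
  by (auto simp: active_def)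

lemma distinct_active: "distinct (active lep xs y)"
  by (simp add: active_def)

lemma active_nth_less: "c < length (active lep xs y) \<Longrightarrow> active lep xs y ! c < length xs"
  using nth_mem[of c "active lep xs y"] set_active[of lep xs y] by auto

lemma active_nth_le: "c < length (active lep xs y) \<Longrightarrow> lep (xs ! (active lep xs y ! c)) y"
  using nth_mem[of c "active lep xs y"] set_active[of lep xs y] by auto

lemma active_nth_eq_iff:
  "r < length (active lep xs y) \<Longrightarrow> c < length (active lep xs y) \<Longrightarrow>
   active lep xs y ! r = active lep xs y ! c \<longleftrightarrow> r = c"
  by (simp add: distinct_active nth_eq_iff_index_eq)

text \<open>
  A vector \<open>u \<in> k\<^bsup>|xs|\<^esub>\<close> in the coordinates of all summands of \<open>\<Oplus>\<^sub>j k[P]\<^bsub>xs!j\<^esub>\<close>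
  represents an element of the value at \<open>y\<close> if it is supported on the active summands;
  \<open>restrict_mat\<close> and \<open>extend_mat\<close> translate between the two coordinate systems.
\<close>

definition restrict_mat :: "('a \<Rightarrow> 'a \<Rightarrow> bool) \<Rightarrow> 'a list \<Rightarrow> 'a \<Rightarrow> 'k::field mat" where
  "restrict_mat lep xs y = mat (length (active lep xs y)) (length xs)
     (\<lambda>(r, j). if j = active lep xs y ! r then 1 else 0)"

definition extend_mat :: "('a \<Rightarrow> 'a \<Rightarrow> bool) \<Rightarrow> 'a list \<Rightarrow> 'a \<Rightarrow> 'k::field mat" where
  "extend_mat lep xs y = mat (length xs) (length (active lep xs y))
     (\<lambda>(j, c). if j = active lep xs y ! c then 1 else 0)"

definition supported_at :: "('a \<Rightarrow> 'a \<Rightarrow> bool) \<Rightarrow> 'a list \<Rightarrow> 'a \<Rightarrow> 'k::field vec \<Rightarrow> bool" where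
  "supported_at lep xs y u \<longleftrightarrow> (\<forall>j < length xs. u $ j \<noteq> 0 \<longrightarrow> lep (xs ! j) y)"

lemma restrict_mat_carrier [simp]:
  "restrict_mat lep xs y \<in> carrier_mat (length (active lep xs y)) (length xs)"
  "dim_row (restrict_mat lep xs y) = length (active lep xs y)"
  "dim_col (restrict_mat lep xs y) = length xs"
  by (simp_all add: restrict_mat_def)

lemma extend_mat_carrier [simp]:
  "extend_mat lep xs y \<in> carrier_mat (length xs) (length (active lep xs y))"
  "dim_row (extend_mat lep xs y) = length xs"
  "dim_col (extend_mat lep xs y) = length (active lep xs y)"
  by (simp_all add: extend_mat_def)

lemma restrict_mat_mult_vec_carrier [simp]:
  "u \<in> carrier_vec (length xs) \<Longrightarrow> restrict_mat lep xs y *\<^sub>v u \<in> carrier_vec (length (active lep xs y))"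
  by (rule mult_mat_vec_carrier[OF restrict_mat_carrier(1)])

lemma extend_mat_mult_vec_carrier [simp]:
  "x \<in> carrier_vec (length (active lep xs y)) \<Longrightarrow> extend_mat lep xs y *\<^sub>v x \<in> carrier_vec (length xs)"
  by (rule mult_mat_vec_carrier[OF extend_mat_carrier(1)])

lemma restrict_mat_mult_vec:
  assumes "u \<in> carrier_vec (length xs)"
  shows "restrict_mat lep xs y *\<^sub>v u = vec (length (active lep xs y)) (\<lambda>r. u $ (active lep xs y ! r))"
proof (rule eq_vecI)
  fix r assume "r < dim_vec (vec (length (active lep xs y)) (\<lambda>r. u $ (active lep xs y ! r)))"
  then have r: "r < length (active lep xs y)" by simp
  have "(restrict_mat lep xs y *\<^sub>v u) $ r
      = (\<Sum>j<length xs. (if j = active lep xs y ! r then 1 else 0) * u $ j)"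
    using r assms
    by (auto simp: restrict_mat_def scalar_prod_def row_def lessThan_atLeast0 intro!: sum.cong)
  also have "\<dots> = (\<Sum>j<length xs. if j = active lep xs y ! r then u $ j else 0)"
    by (rule sum.cong) auto
  also have "\<dots> = u $ (active lep xs y ! r)"
    using active_nth_less[OF r] by simp
  finally show "(restrict_mat lep xs y *\<^sub>v u) $ r
      = vec (length (active lep xs y)) (\<lambda>r. u $ (active lep xs y ! r)) $ r"
    using r by simp
qed simp

lemma extend_mat_mult_vec:
  assumes "x \<in> carrier_vec (length (active lep xs y))"
  shows "extend_mat lep xs y *\<^sub>v x = vec (length xs)
    (\<lambda>j. \<Sum>c<length (active lep xs y). if j = active lep xs y ! c then x $ c else 0)"
  using assms by (intro eq_vecI) (auto simp: extend_mat_def scalar_prod_def row_def lessThan_atLeast0 intro!: sum.cong)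

lemma restrict_extend:
  assumes x: "x \<in> carrier_vec (length (active lep xs y))"
  shows "restrict_mat lep xs y *\<^sub>v (extend_mat lep xs y *\<^sub>v x) = x"
proof (rule eq_vecI)
  fix r assume "r < dim_vec x"
  then have r: "r < length (active lep xs y)" using x by simp
  have "(restrict_mat lep xs y *\<^sub>v (extend_mat lep xs y *\<^sub>v x)) $ r
      = (\<Sum>c<length (active lep xs y). if active lep xs y ! r = active lep xs y ! c then x $ c else 0)"
    using x r active_nth_less[OF r] by (simp add: restrict_mat_mult_vec extend_mat_mult_vec)
  also have "\<dots> = (\<Sum>c<length (active lep xs y). if c = r then x $ c else 0)"
    using r by (auto simp: active_nth_eq_iff intro!: sum.cong)
  finally show "(restrict_mat lep xs y *\<^sub>v (extend_mat lep xs y *\<^sub>v x)) $ r = x $ r"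
    using r by simp
qed (use x in simp)

lemma extend_restrict:
  assumes u: "u \<in> carrier_vec (length xs)" and supp: "supported_at lep xs y u"
  shows "extend_mat lep xs y *\<^sub>v (restrict_mat lep xs y *\<^sub>v u) = u"
proof (rule eq_vecI)
  fix j assume "j < dim_vec u"
  then have j: "j < length xs" using u by simp
  have sum_eq: "(extend_mat lep xs y *\<^sub>v (restrict_mat lep xs y *\<^sub>v u)) $ j
      = (\<Sum>c<length (active lep xs y). if j = active lep xs y ! c then u $ j else 0)"
    using u j by (auto simp: restrict_mat_mult_vec extend_mat_mult_vec intro!: sum.cong)
  show "(extend_mat lep xs y *\<^sub>v (restrict_mat lep xs y *\<^sub>v u)) $ j = u $ j"
  proof (cases "j \<in> set (active lep xs y)")
    case True
    then obtain c0 where c0: "c0 < length (active lep xs y)" "active lep xs y ! c0 = j"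
      by (auto simp: in_set_conv_nth)
    have "(\<Sum>c<length (active lep xs y). if j = active lep xs y ! c then u $ j else 0)
        = (\<Sum>c<length (active lep xs y). if c = c0 then u $ j else 0)"
      using c0 by (auto simp: active_nth_eq_iff intro!: sum.cong)
    then show ?thesis using sum_eq c0 by simp
  next
    case False
    then have "u $ j = 0" using supp j set_active[of lep xs y] unfolding supported_at_def by auto
    moreover have "\<forall>c < length (active lep xs y). j \<noteq> active lep xs y ! c"
      using False nth_mem by metis
    ultimately show ?thesis using sum_eq by simp
  qed
qed (use u in simp)

lemma supported_at_extend:
  assumes "x \<in> carrier_vec (length (active lep xs y))"
  shows "supported_at lep xs y (extend_mat lep xs y *\<^sub>v x)"
  unfolding supported_at_def
proof (intro allI impI)
  fix j assume "j < length xs" and "(extend_mat lep xs y *\<^sub>v x) $ j \<noteq> 0"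
  then have "(\<Sum>c<length (active lep xs y). if j = active lep xs y ! c then x $ c else 0) \<noteq> 0"
    using assms by (simp add: extend_mat_mult_vec)
  then obtain c where "c \<in> {..<length (active lep xs y)}"
    and "(if j = active lep xs y ! c then x $ c else 0) \<noteq> 0"
    by (rule sum.not_neutral_contains_not_neutral)
  then have "c < length (active lep xs y)" "j = active lep xs y ! c"
    by (auto split: if_splits)
  then show "lep (xs ! j) y" using active_nth_le by metis
qed

lemma supported_at_mono:
  assumes "finite_poset X lep" "set xs \<subseteq> X" "y \<in> X" "z \<in> X" "lep y z"
    and "supported_at lep xs y u"
  shows "supported_at lep xs z u"
  using assms unfolding supported_at_def finite_poset_def by (metis nth_mem subsetD)

lemma proj_struct_carrier [simp]:
  "proj_struct lep xs y z \<in> carrier_mat (length (active lep xs z)) (length (active lep xs y))"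
  by (simp add: proj_struct_def)

lemma mat_morph_at_carrier [simp]:
  "mat_morph_at lep xs' xs A y \<in> carrier_mat (length (active lep xs y)) (length (active lep xs' y))"
  "dim_row (mat_morph_at lep xs' xs A y) = length (active lep xs y)"
  "dim_col (mat_morph_at lep xs' xs A y) = length (active lep xs' y)"
  by (simp_all add: mat_morph_at_def)

lemma proj_struct_mult_vec:
  assumes v: "v \<in> carrier_vec (length (active lep xs y))"
  shows "proj_struct lep xs y z *\<^sub>v v = restrict_mat lep xs z *\<^sub>v (extend_mat lep xs y *\<^sub>v v)"
proof (rule eq_vecI)
  fix r assume "r < dim_vec (restrict_mat lep xs z *\<^sub>v (extend_mat lep xs y *\<^sub>v v))"
  then have r: "r < length (active lep xs z)" by simp
  have "(restrict_mat lep xs z *\<^sub>v (extend_mat lep xs y *\<^sub>v v)) $ r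
      = (\<Sum>c<length (active lep xs y). if active lep xs z ! r = active lep xs y ! c then v $ c else 0)"
    using v r active_nth_less[OF r] by (simp add: restrict_mat_mult_vec extend_mat_mult_vec)
  also have "\<dots> = (proj_struct lep xs y z *\<^sub>v v) $ r"
    using r v by (subst mult_mat_vec_index_sum) (auto simp: proj_struct_def intro!: sum.cong)
  finally show "(proj_struct lep xs y z *\<^sub>v v) $ r
      = (restrict_mat lep xs z *\<^sub>v (extend_mat lep xs y *\<^sub>v v)) $ r" by simp
qed (simp add: proj_struct_def)

lemma mat_morph_at_mult_vec:
  assumes A: "A \<in> carrier_mat (length xs') (length xs)"
    and v: "v \<in> carrier_vec (length (active lep xs' y))"
  shows "mat_morph_at lep xs' xs A y *\<^sub>v v
    = restrict_mat lep xs y *\<^sub>v (A\<^sup>T *\<^sub>v (extend_mat lep xs' y *\<^sub>v v))"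
proof (rule eq_vecI)
  let ?a = "active lep xs y" and ?a' = "active lep xs' y"
  have ext: "extend_mat lep xs' y *\<^sub>v v \<in> carrier_vec (length xs')" using v by simp
  then have Aext: "A\<^sup>T *\<^sub>v (extend_mat lep xs' y *\<^sub>v v) \<in> carrier_vec (length xs)" using A by simp
  fix r assume "r < dim_vec (restrict_mat lep xs y *\<^sub>v (A\<^sup>T *\<^sub>v (extend_mat lep xs' y *\<^sub>v v)))"
  then have r: "r < length ?a" by simp
  have "(restrict_mat lep xs y *\<^sub>v (A\<^sup>T *\<^sub>v (extend_mat lep xs' y *\<^sub>v v))) $ r
      = (A\<^sup>T *\<^sub>v (extend_mat lep xs' y *\<^sub>v v)) $ (?a ! r)"
    using r by (simp add: restrict_mat_mult_vec[OF Aext])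
  also have "\<dots> = (\<Sum>j'<length xs'. A $$ (j', ?a ! r) * (extend_mat lep xs' y *\<^sub>v v) $ j')"
    using active_nth_less[OF r] A ext by (subst mult_mat_vec_index_sum) auto
  also have "\<dots> = (\<Sum>j'<length xs'. \<Sum>c<length ?a'.
      if j' = ?a' ! c then A $$ (j', ?a ! r) * v $ c else 0)"
    using v by (auto simp: extend_mat_mult_vec sum_distrib_left intro!: sum.cong)
  also have "\<dots> = (\<Sum>c<length ?a'. \<Sum>j'<length xs'.
      if j' = ?a' ! c then A $$ (j', ?a ! r) * v $ c else 0)"
    by (rule sum.swap)
  also have "\<dots> = (\<Sum>c<length ?a'. A $$ (?a' ! c, ?a ! r) * v $ c)"
    using active_nth_less[of _ lep xs' y] by (auto intro!: sum.cong)
  also have "\<dots> = (mat_morph_at lep xs' xs A y *\<^sub>v v) $ r"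
    using r v by (subst mult_mat_vec_index_sum) (auto simp: mat_morph_at_def intro!: sum.cong)
  finally show "(mat_morph_at lep xs' xs A y *\<^sub>v v) $ r
      = (restrict_mat lep xs y *\<^sub>v (A\<^sup>T *\<^sub>v (extend_mat lep xs' y *\<^sub>v v))) $ r" by simp
qed simp

definition order_compatible :: "('a \<Rightarrow> 'a \<Rightarrow> bool) \<Rightarrow> 'a list \<Rightarrow> 'a list \<Rightarrow> 'k::field mat \<Rightarrow> bool" where
  "order_compatible lep xs xs' A \<longleftrightarrow>
     (\<forall>r < length xs'. \<forall>c < length xs. \<not> lep (xs ! c) (xs' ! r) \<longrightarrow> A $$ (r, c) = 0)"

lemma supported_at_transpose_mult:
  assumes "finite_poset X lep" and "set xs \<subseteq> X" "set xs' \<subseteq> X" "y \<in> X"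
    and A: "A \<in> carrier_mat (length xs') (length xs)" and "order_compatible lep xs xs' A"
    and w: "w \<in> carrier_vec (length xs')" and "supported_at lep xs' y w"
  shows "supported_at lep xs y (A\<^sup>T *\<^sub>v w)"
  unfolding supported_at_def
proof (intro allI impI)
  fix j assume j: "j < length xs" and "(A\<^sup>T *\<^sub>v w) $ j \<noteq> 0"
  then have "(\<Sum>j'<length xs'. A $$ (j', j) * w $ j') \<noteq> 0"
    using A w j by (subst (asm) mult_mat_vec_index_sum) auto
  then obtain j' where j': "j' < length xs'" "A $$ (j', j) * w $ j' \<noteq> 0"
    by (metis (no_types, lifting) lessThan_iff sum.neutral)
  then have "lep (xs ! j) (xs' ! j')" "lep (xs' ! j') y"
    using assms j unfolding order_compatible_def supported_at_def by auto
  then show "lep (xs ! j) y"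
    using assms j j' unfolding finite_poset_def by (meson nth_mem subsetD)
qed

lemma mat_morph_at_natural:
  fixes A :: "'k::field mat"
  assumes fp: "finite_poset X lep" and X: "set xs \<subseteq> X" "set xs' \<subseteq> X"
    and A: "A \<in> carrier_mat (length xs') (length xs)" and comp: "order_compatible lep xs xs' A"
    and y: "y \<in> X" and z: "z \<in> X" and yz: "lep y z"
  shows "mat_morph_at lep xs' xs A z * proj_struct lep xs' y z
    = proj_struct lep xs y z * mat_morph_at lep xs' xs A y"
proof (rule mat_eq_mult_vecI[where p = "length (active lep xs z)"])
  fix v :: "'k vec" assume v: "v \<in> carrier_vec (length (active lep xs' y))"
  define u where "u = extend_mat lep xs' y *\<^sub>v v"
  have u: "u \<in> carrier_vec (length xs')" "supported_at lep xs' y u"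
    using v supported_at_extend[OF v] unfolding u_def by auto
  have Au: "A\<^sup>T *\<^sub>v u \<in> carrier_vec (length xs)" using A u by simp
  have mm_y: "mat_morph_at lep xs' xs A y *\<^sub>v v = restrict_mat lep xs y *\<^sub>v (A\<^sup>T *\<^sub>v u)"
    unfolding u_def by (rule mat_morph_at_mult_vec[OF A v])
  have "(mat_morph_at lep xs' xs A z * proj_struct lep xs' y z) *\<^sub>v v
      = restrict_mat lep xs z *\<^sub>v (A\<^sup>T *\<^sub>v
          (extend_mat lep xs' z *\<^sub>v (restrict_mat lep xs' z *\<^sub>v u)))"
    using v by (simp add: assoc_mult_mat_vec[OF mat_morph_at_carrier(1) proj_struct_carrier v]
        mat_morph_at_mult_vec[OF A] proj_struct_mult_vec u_def)
  also have "\<dots> = restrict_mat lep xs z *\<^sub>v (A\<^sup>T *\<^sub>v u)"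
    using extend_restrict[OF u(1) supported_at_mono[OF fp X(2) y z yz u(2)]] by simp
  also have "\<dots> = restrict_mat lep xs z *\<^sub>v
      (extend_mat lep xs y *\<^sub>v (restrict_mat lep xs y *\<^sub>v (A\<^sup>T *\<^sub>v u)))"
    using extend_restrict[OF Au supported_at_transpose_mult[OF fp X y A comp u]] by simp
  also have "\<dots> = (proj_struct lep xs y z * mat_morph_at lep xs' xs A y) *\<^sub>v v"
    using Au by (simp add: assoc_mult_mat_vec[OF proj_struct_carrier mat_morph_at_carrier(1) v]
        mm_y proj_struct_mult_vec)
  finally show "(mat_morph_at lep xs' xs A z * proj_struct lep xs' y z) *\<^sub>v v
      = (proj_struct lep xs y z * mat_morph_at lep xs' xs A y) *\<^sub>v v" .
qed (auto intro!: mult_carrier_mat)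

text \<open>
  The invariant of the inductive construction of a resolution: the pointwise kernels of \<open>\<phi>\<close>
  form a submodule of \<open>\<Oplus>\<^sub>j k[P]\<^bsub>xs!j\<^esub>\<close>.
\<close>

definition kernel_closed :: "'a set \<Rightarrow> ('a \<Rightarrow> 'a \<Rightarrow> bool) \<Rightarrow> 'a list \<Rightarrow> ('a \<Rightarrow> 'k::field mat) \<Rightarrow> bool" where
  "kernel_closed X lep xs \<phi> \<longleftrightarrow> (\<forall>y\<in>X. dim_col (\<phi> y) = length (active lep xs y))
    \<and> (\<forall>y\<in>X. \<forall>z\<in>X. lep y z \<longrightarrow> (\<forall>v \<in> carrier_vec (length (active lep xs y)).
         \<phi> y *\<^sub>v v = 0\<^sub>v (dim_row (\<phi> y)) \<longrightarrow> \<phi> z *\<^sub>v (proj_struct lep xs y z *\<^sub>v v) = 0\<^sub>v (dim_row (\<phi> z))))"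

lemma kernel_closed_if_natural:
  fixes \<phi> T :: "'a \<Rightarrow> _"
  assumes \<phi>: "\<And>y. y \<in> X \<Longrightarrow> \<phi> y \<in> carrier_mat (n y) (length (active lep xs y))"
    and T: "\<And>y z. y \<in> X \<Longrightarrow> z \<in> X \<Longrightarrow> lep y z \<Longrightarrow> T y z \<in> carrier_mat (n z) (n y)"
    and nat: "\<And>y z. y \<in> X \<Longrightarrow> z \<in> X \<Longrightarrow> lep y z \<Longrightarrow>
      \<phi> z * proj_struct lep xs y z = T y z * (\<phi> y :: 'k::field mat)"
  shows "kernel_closed X lep xs \<phi>"
  unfolding kernel_closed_def
proof (intro conjI ballI impI)
  fix y z v assume y: "y \<in> X" and z: "z \<in> X" and yz: "lep y z"
    and v: "v \<in> carrier_vec (length (active lep xs y))" and "\<phi> y *\<^sub>v v = 0\<^sub>v (dim_row (\<phi> y))"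
  then have "\<phi> y *\<^sub>v v = 0\<^sub>v (n y)" using \<phi>[OF y] by simp
  have "\<phi> z *\<^sub>v (proj_struct lep xs y z *\<^sub>v v) = (\<phi> z * proj_struct lep xs y z) *\<^sub>v v"
    using assoc_mult_mat_vec[OF \<phi>[OF z] proj_struct_carrier v] by simp
  also have "\<dots> = T y z *\<^sub>v (\<phi> y *\<^sub>v v)"
    using nat[OF y z yz] T[OF y z yz] \<phi>[OF y] v by simp
  finally show "\<phi> z *\<^sub>v (proj_struct lep xs y z *\<^sub>v v) = 0\<^sub>v (dim_row (\<phi> z))"
    using \<open>\<phi> y *\<^sub>v v = 0\<^sub>v (n y)\<close> T[OF y z yz] \<phi>[OF z] by auto
qed (use \<phi> in auto)

lemma kernel_closed_mat_morph_at:
  assumes "finite_poset X lep" "set xs \<subseteq> X" "set xs' \<subseteq> X"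
    and "A \<in> carrier_mat (length xs') (length xs)" "order_compatible lep xs xs' A"
  shows "kernel_closed X lep xs' (mat_morph_at lep xs' xs A)"
  using mat_morph_at_natural[OF assms]
  by (intro kernel_closed_if_natural[where T = "proj_struct lep xs"]) auto

section \<open>Kernels of matrices as images\<close>

lemma kernel_projection_row_exists:
  fixes r :: "'k::field vec"
  assumes r: "r \<in> carrier_vec n"
  shows "\<exists>K \<in> carrier_mat n n. (\<forall>w\<in>carrier_vec n. r \<bullet> (K *\<^sub>v w) = 0)
     \<and> (\<forall>x\<in>carrier_vec n. r \<bullet> x = 0 \<longrightarrow> K *\<^sub>v x = x)"
proof (cases "r = 0\<^sub>v n")
  case True
  show ?thesis by (rule bexI[of _ "1\<^sub>m n"]) (auto simp: True)
next
  case False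
  then obtain i where i: "i < n" "r $ i \<noteq> 0" using r by (metis eq_vecI carrier_vecD index_zero_vec)
  define K where "K = mat n n (\<lambda>(a,k). (if a = k then 1 else 0) - (if a = i then r$k / r$i else 0))"
  have K: "K \<in> carrier_mat n n" unfolding K_def by simp
  have K_mult_vec: "K *\<^sub>v w = w - ((r \<bullet> w) / r $ i) \<cdot>\<^sub>v unit_vec n i" if w: "w \<in> carrier_vec n" for w
  proof (rule eq_vecI)
    fix a assume "a < dim_vec (w - ((r \<bullet> w) / r $ i) \<cdot>\<^sub>v unit_vec n i)"
    then have a: "a < n" using w by simp
    have "(K *\<^sub>v w) $ a = (\<Sum>k<n. ((if a = k then 1 else 0) - (if a = i then r$k / r$i else 0)) * w $ k)"
      using a w K by (subst mult_mat_vec_index_sum) (auto simp: K_def intro!: sum.cong)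
    also have "\<dots> = (\<Sum>k<n. (if a = k then w $ k else 0)) - (\<Sum>k<n. (if a = i then r$k * w $ k / r$i else 0))"
      by (subst sum_subtractf[symmetric]) (auto intro!: sum.cong)
    also have "\<dots> = w $ a - (if a = i then (\<Sum>k<n. r$k * w $ k) / r$i else 0)"
      using a by (auto simp: sum_divide_distrib)
    also have "(\<Sum>k<n. r$k * w $ k) = r \<bullet> w" using w by (simp add: scalar_prod_def lessThan_atLeast0)
    finally show "(K *\<^sub>v w) $ a = (w - ((r \<bullet> w) / r $ i) \<cdot>\<^sub>v unit_vec n i) $ a"
      using a w by (auto simp: unit_vec_def)
  qed (use w K in auto)
  show ?thesis
  proof (rule bexI[OF _ K], intro conjI ballI impI)
    fix w :: "'k vec" assume w: "w \<in> carrier_vec n"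
    have "r \<bullet> (K *\<^sub>v w) = r \<bullet> w - r \<bullet> (((r \<bullet> w) / r $ i) \<cdot>\<^sub>v unit_vec n i)"
      unfolding K_mult_vec[OF w] by (rule scalar_prod_minus_distrib[OF r w]) simp
    also have "\<dots> = 0" using r i w by simp
    finally show "r \<bullet> (K *\<^sub>v w) = 0" .
  next
    fix x :: "'k vec" assume x: "x \<in> carrier_vec n" and "r \<bullet> x = 0"
    then show "K *\<^sub>v x = x" unfolding K_mult_vec[OF x] using x by (auto intro!: eq_vecI)
  qed
qed

lemma kernel_projection_rows_exists:
  fixes rs :: "'k::field vec list"
  assumes "\<forall>r\<in>set rs. r \<in> carrier_vec n"
  shows "\<exists>K \<in> carrier_mat n n. (\<forall>w\<in>carrier_vec n. \<forall>r\<in>set rs. r \<bullet> (K *\<^sub>v w) = 0)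
     \<and> (\<forall>x\<in>carrier_vec n. (\<forall>r\<in>set rs. r \<bullet> x = 0) \<longrightarrow> (\<exists>w\<in>carrier_vec n. x = K *\<^sub>v w))"
  using assms
proof (induction rs)
  case Nil
  show ?case by (rule bexI[of _ "1\<^sub>m n"]) auto
next
  case (Cons r rs)
  then obtain K0 where K0: "K0 \<in> carrier_mat n n"
    and K0_ker: "\<forall>w\<in>carrier_vec n. \<forall>r\<in>set rs. r \<bullet> (K0 *\<^sub>v w) = 0"
    and K0_onto: "\<forall>x\<in>carrier_vec n. (\<forall>r\<in>set rs. r \<bullet> x = 0) \<longrightarrow> (\<exists>w\<in>carrier_vec n. x = K0 *\<^sub>v w)"
    by auto
  have r: "r \<in> carrier_vec n" using Cons by auto
  define r' where "r' = K0\<^sup>T *\<^sub>v r"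
  have r': "r' \<in> carrier_vec n" using K0 r unfolding r'_def by auto
  have r'_scalar: "r \<bullet> (K0 *\<^sub>v w) = r' \<bullet> w" if "w \<in> carrier_vec n" for w
    unfolding r'_def using transpose_vec_mult_scalar[OF K0 that r] by simp
  obtain K1 where K1: "K1 \<in> carrier_mat n n" and K1_ker: "\<forall>w\<in>carrier_vec n. r' \<bullet> (K1 *\<^sub>v w) = 0"
    and K1_fix: "\<forall>x\<in>carrier_vec n. r' \<bullet> x = 0 \<longrightarrow> K1 *\<^sub>v x = x"
    using kernel_projection_row_exists[OF r'] by auto
  show ?case
  proof (rule bexI[of _ "K0 * K1"], intro conjI ballI impI)
    fix w :: "'k vec" and q assume w: "w \<in> carrier_vec n" and q: "q \<in> set (r # rs)"
    have e: "K0 * K1 *\<^sub>v w = K0 *\<^sub>v (K1 *\<^sub>v w)" using K0 K1 w by auto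
    have kw: "K1 *\<^sub>v w \<in> carrier_vec n" using K1 w by auto
    show "q \<bullet> (K0 * K1 *\<^sub>v w) = 0"
    proof (cases "q = r")
      case True then show ?thesis using e r'_scalar[OF kw] K1_ker w by simp
    next
      case False then show ?thesis using e K0_ker kw q by auto
    qed
  next
    fix x :: "'k vec" assume x: "x \<in> carrier_vec n" and orth: "\<forall>q\<in>set (r # rs). q \<bullet> x = 0"
    then obtain w where w: "w \<in> carrier_vec n" "x = K0 *\<^sub>v w" using K0_onto by auto
    have "r' \<bullet> w = 0" using r'_scalar[OF w(1)] orth w by auto
    then have "K1 *\<^sub>v w = w" using K1_fix w by auto
    then show "\<exists>w\<in>carrier_vec n. x = K0 * K1 *\<^sub>v w" using w K0 K1 by (intro bexI[of _ w]) auto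
  qed (use K0 K1 in auto)
qed

lemma kernel_as_image_mat:
  fixes A :: "'k::field mat"
  assumes A: "A \<in> carrier_mat p n"
  shows "\<exists>K \<in> carrier_mat n n. (\<forall>w\<in>carrier_vec n. A *\<^sub>v (K *\<^sub>v w) = 0\<^sub>v p)
     \<and> (\<forall>x\<in>carrier_vec n. A *\<^sub>v x = 0\<^sub>v p \<longrightarrow> (\<exists>w\<in>carrier_vec n. x = K *\<^sub>v w))"
proof -
  have "\<forall>r\<in>set (rows A). r \<in> carrier_vec n" using A by (auto simp: rows_def)
  from kernel_projection_rows_exists[OF this] obtain K where K: "K \<in> carrier_mat n n"
    and K_ker: "\<forall>w\<in>carrier_vec n. \<forall>r\<in>set (rows A). r \<bullet> (K *\<^sub>v w) = 0"
    and K_onto: "\<forall>x\<in>carrier_vec n. (\<forall>r\<in>set (rows A). r \<bullet> x = 0) \<longrightarrow> (\<exists>w\<in>carrier_vec n. x = K *\<^sub>v w)"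
    by auto
  have ker_iff: "A *\<^sub>v x = 0\<^sub>v p \<longleftrightarrow> (\<forall>r\<in>set (rows A). r \<bullet> x = 0)" for x
  proof -
    have "A *\<^sub>v x = 0\<^sub>v p \<longleftrightarrow> (\<forall>i<p. row A i \<bullet> x = 0)"
      using A by (auto simp: vec_eq_iff)
    also have "\<dots> \<longleftrightarrow> (\<forall>r\<in>set (rows A). r \<bullet> x = 0)"
      using A by (auto simp: rows_def)
    finally show ?thesis .
  qed
  show ?thesis using K K_ker K_onto ker_iff by (intro bexI[OF _ K]) auto
qed

section \<open>Existence of projective resolutions\<close>

lemma sum_block:
  fixes g :: "nat \<Rightarrow> 'k::comm_monoid_add"
  assumes "b < L"
  shows "(\<Sum>j<L*m. if j div m = b then g (j mod m) else 0) = (\<Sum>k<m. g k)"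
proof (cases "m = 0")
  case True then show ?thesis by simp
next
  case False
  have "(\<Sum>j<L*m. if j div m = b then g (j mod m) else 0) = (\<Sum>j\<in>{j. j < L*m \<and> j div m = b}. g (j mod m))"
    by (simp add: sum.If_cases Int_def lessThan_def conj_commute)
  also have "{j. j < L*m \<and> j div m = b} = (\<lambda>k. b*m + k) ` {..<m}"
  proof safe
    fix j assume j: "j < L*m" "b = j div m"
    then show "j \<in> (\<lambda>k. j div m * m + k) ` {..<m}"
      using False by (intro image_eqI[of _ _ "j mod m"]) auto
  next
    fix k assume "k < m"
    then have "b*m + k < (b+1)*m" by simp
    also have "(b+1)*m \<le> L*m" using assms by (intro mult_le_mono1) simp
    finally show "b*m + k < L*m" .
    show "(b*m+k) div m = b" using \<open>k < m\<close> by simp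
  qed
  also have "(\<Sum>j\<in>(\<lambda>k. b*m + k) ` {..<m}. g (j mod m)) = (\<Sum>k<m. g ((b*m+k) mod m))"
    by (subst sum.reindex) (auto simp: inj_on_def)
  also have "\<dots> = (\<Sum>k<m. g k)" by simp
  finally show ?thesis .
qed

definition repeat_points :: "'a list \<Rightarrow> nat \<Rightarrow> 'a list" where
  "repeat_points ys m = map (\<lambda>j. ys ! (j div m)) [0..<length ys * m]"

lemma length_repeat_points [simp]: "length (repeat_points ys m) = length ys * m"
  by (simp add: repeat_points_def)

lemma nth_repeat_points: "j < length ys * m \<Longrightarrow> repeat_points ys m ! j = ys ! (j div m)"
  by (simp add: repeat_points_def)

lemma set_repeat_points: "set (repeat_points ys m) \<subseteq> set ys"
  by (auto simp: repeat_points_def less_mult_imp_div_less)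

lemma supported_at_repeat_points_block:
  assumes "b < length ys" "lep (ys ! b) (ys ! b)"
  shows "supported_at lep (repeat_points ys m) (ys ! b)
    (vec (length ys * m) (\<lambda>j. if j div m = b then f (j mod m) else 0))"
  using assms by (auto simp: supported_at_def nth_repeat_points split: if_splits)

text \<open>
  Column \<open>j\<close> of \<open>gen_mat lep M xs m y\<close> is the image in \<open>M(y)\<close> of the generator of the summand
  \<open>k[P]\<^bsub>xs!j\<^esub>\<close>, which is sent to the \<open>(j mod m)\<close>-th basis vector of \<open>M(xs!j)\<close> (or to \<open>0\<close>).
\<close>

definition gen_mat :: "('a \<Rightarrow> 'a \<Rightarrow> bool) \<Rightarrow> ('a, 'k::field) pmod \<Rightarrow> 'a list \<Rightarrow> nat \<Rightarrow> 'a \<Rightarrow> 'k mat" where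
  "gen_mat lep M xs m y = mat (fst M y) (length xs) (\<lambda>(r, j).
     if j mod m < fst M (xs ! j) \<and> lep (xs ! j) y then snd M (xs ! j) y $$ (r, j mod m) else 0)"

lemma gen_mat_carrier [simp]:
  "gen_mat lep M xs m y \<in> carrier_mat (fst M y) (length xs)"
  "dim_row (gen_mat lep M xs m y) = fst M y"
  "dim_col (gen_mat lep M xs m y) = length xs"
  by (simp_all add: gen_mat_def)

lemma gen_mat_natural:
  assumes fp: "finite_poset X lep" and M: "is_pmod X lep M" and xs: "set xs \<subseteq> X"
    and y: "y \<in> X" and z: "z \<in> X" and yz: "lep y z"
    and u: "u \<in> carrier_vec (length xs)" and supp: "supported_at lep xs y u"
  shows "gen_mat lep M xs m z *\<^sub>v u = snd M y z *\<^sub>v (gen_mat lep M xs m y *\<^sub>v u)"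
proof -
  let ?G = "gen_mat lep M xs m"
  have Myz: "snd M y z \<in> carrier_mat (fst M z) (fst M y)"
    using M y z yz unfolding is_pmod_def by blast
  have col_eq: "?G z $$ (r, j) = (snd M y z * ?G y) $$ (r, j)"
    if r: "r < fst M z" and j: "j < length xs" and xy: "lep (xs ! j) y" for r j
  proof -
    have x: "xs ! j \<in> X" using xs j by auto
    have xz: "lep (xs ! j) z" using fp x y z xy yz unfolding finite_poset_def by blast
    have Mxy: "snd M (xs ! j) y \<in> carrier_mat (fst M y) (fst M (xs ! j))"
      using M x y xy unfolding is_pmod_def by blast
    show ?thesis
    proof (cases "j mod m < fst M (xs ! j)")
      case True
      have "col (?G y) j = col (snd M (xs ! j) y) (j mod m)"
        using True xy Mxy j by (auto simp: gen_mat_def intro!: eq_vecI)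
      then have "(snd M y z * ?G y) $$ (r, j) = (snd M y z * snd M (xs ! j) y) $$ (r, j mod m)"
        using Myz Mxy r j True by simp
      also have "\<dots> = snd M (xs ! j) z $$ (r, j mod m)"
        using M x y z xy yz unfolding is_pmod_def by metis
      finally show ?thesis using True xz r j by (simp add: gen_mat_def)
    next
      case False
      then have "col (?G y) j = 0\<^sub>v (fst M y)" using j by (auto simp: gen_mat_def intro!: eq_vecI)
      then show ?thesis using False r j Myz by (simp add: gen_mat_def)
    qed
  qed
  have "?G z *\<^sub>v u = (snd M y z * ?G y) *\<^sub>v u"
  proof (rule eq_vecI)
    fix r assume "r < dim_vec ((snd M y z * ?G y) *\<^sub>v u)"
    then have r: "r < fst M z" using Myz by simp
    have "(?G z *\<^sub>v u) $ r = (\<Sum>j<length xs. ?G z $$ (r, j) * u $ j)"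
      using r u by (subst mult_mat_vec_index_sum) auto
    also have "\<dots> = (\<Sum>j<length xs. (snd M y z * ?G y) $$ (r, j) * u $ j)"
      using col_eq r supp unfolding supported_at_def by (intro sum.cong) auto
    also have "\<dots> = ((snd M y z * ?G y) *\<^sub>v u) $ r"
      using r u Myz by (subst mult_mat_vec_index_sum) auto
    finally show "(?G z *\<^sub>v u) $ r = ((snd M y z * ?G y) *\<^sub>v u) $ r" .
  qed (use Myz in simp)
  then show ?thesis using assoc_mult_mat_vec[OF Myz gen_mat_carrier(1) u] by simp
qed

lemma gen_mat_surj:
  assumes M: "is_pmod X lep M" and "lep (ys ! b) (ys ! b)"
    and b: "b < length ys" "ys ! b \<in> X" and dim: "fst M (ys ! b) \<le> m"
    and v: "v \<in> carrier_vec (fst M (ys ! b))"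
  shows "gen_mat lep M (repeat_points ys m) m (ys ! b) *\<^sub>v
    vec (length ys * m) (\<lambda>j. if j div m = b then (if j mod m < fst M (ys ! b) then v $ (j mod m) else 0) else 0) = v"
  (is "?G *\<^sub>v ?w = v")
proof (rule eq_vecI)
  let ?y = "ys ! b"
  have id: "snd M ?y ?y = 1\<^sub>m (fst M ?y)" using M b unfolding is_pmod_def by blast
  fix r assume "r < dim_vec v"
  then have r: "r < fst M ?y" using v by simp
  have "(?G *\<^sub>v ?w) $ r = (\<Sum>j<length ys * m. ?G $$ (r, j) * ?w $ j)"
    using r by (subst mult_mat_vec_index_sum) auto
  also have "\<dots> = (\<Sum>j<length ys * m. if j div m = b then
      (if j mod m < fst M ?y then 1\<^sub>m (fst M ?y) $$ (r, j mod m) * v $ (j mod m) else 0) else 0)"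
    using r assms(2) id by (auto simp: gen_mat_def nth_repeat_points intro!: sum.cong)
  also have "\<dots> = (\<Sum>k<m. if k < fst M ?y then 1\<^sub>m (fst M ?y) $$ (r, k) * v $ k else 0)"
    by (rule sum_block[OF b(1)])
  also have "\<dots> = (\<Sum>k<m. if k = r then v $ k else 0)"
    using r by (intro sum.cong) auto
  also have "\<dots> = v $ r" using r dim by simp
  finally show "(?G *\<^sub>v ?w) $ r = v $ r" .
qed (use v in simp)

lemma gen_mat_extend_natural:
  fixes M :: "('a, 'k::field) pmod"
  assumes fp: "finite_poset X lep" and M: "is_pmod X lep M" and xs: "set xs \<subseteq> X"
    and y: "y \<in> X" and z: "z \<in> X" and yz: "lep y z"
  shows "gen_mat lep M xs m z * extend_mat lep xs z * proj_struct lep xs y z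
    = snd M y z * (gen_mat lep M xs m y * extend_mat lep xs y)"
proof -
  let ?\<epsilon> = "\<lambda>y. gen_mat lep M xs m y * extend_mat lep xs y"
  have \<epsilon>: "?\<epsilon> y \<in> carrier_mat (fst M y) (length (active lep xs y))" for y
    using gen_mat_carrier(1) extend_mat_carrier(1) by (rule mult_carrier_mat)
  have \<epsilon>_mult_vec: "?\<epsilon> y *\<^sub>v x = gen_mat lep M xs m y *\<^sub>v (extend_mat lep xs y *\<^sub>v x)"
    if "x \<in> carrier_vec (length (active lep xs y))" for x y
    by (rule assoc_mult_mat_vec[OF gen_mat_carrier(1) extend_mat_carrier(1) that])
  have Myz: "snd M y z \<in> carrier_mat (fst M z) (fst M y)"
    using M y z yz unfolding is_pmod_def by blast
  show ?thesis
  proof (rule mat_eq_mult_vecI[where p = "fst M z"])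
    fix v :: "'k vec" assume v: "v \<in> carrier_vec (length (active lep xs y))"
    define u where "u = extend_mat lep xs y *\<^sub>v v"
    have u: "u \<in> carrier_vec (length xs)" "supported_at lep xs y u"
      using v supported_at_extend[OF v] unfolding u_def by auto
    have "(?\<epsilon> z * proj_struct lep xs y z) *\<^sub>v v
        = gen_mat lep M xs m z *\<^sub>v (extend_mat lep xs z *\<^sub>v (restrict_mat lep xs z *\<^sub>v u))"
      using v by (simp add: assoc_mult_mat_vec[OF \<epsilon> proj_struct_carrier v]
          \<epsilon>_mult_vec proj_struct_mult_vec u_def)
    also have "\<dots> = gen_mat lep M xs m z *\<^sub>v u"
      using extend_restrict[OF u(1) supported_at_mono[OF fp xs y z yz u(2)]] by simp
    also have "\<dots> = snd M y z *\<^sub>v (?\<epsilon> y *\<^sub>v v)"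
      using gen_mat_natural[OF fp M xs y z yz u] v by (simp add: \<epsilon>_mult_vec u_def)
    also have "\<dots> = (snd M y z * ?\<epsilon> y) *\<^sub>v v"
      using assoc_mult_mat_vec[OF Myz \<epsilon> v] by simp
    finally show "(?\<epsilon> z * proj_struct lep xs y z) *\<^sub>v v = (snd M y z * ?\<epsilon> y) *\<^sub>v v" .
  qed (use \<epsilon> Myz in \<open>auto intro!: mult_carrier_mat\<close>)
qed

lemma gen_mat_extend_surj:
  assumes fp: "finite_poset X lep" and M: "is_pmod X lep M" and ys: "set ys = X"
    and y: "y \<in> X" and dim: "fst M y \<le> m" and v: "v \<in> carrier_vec (fst M y)"
  shows "\<exists>x\<in>carrier_vec (length (active lep (repeat_points ys m) y)).
    (gen_mat lep M (repeat_points ys m) m y * extend_mat lep (repeat_points ys m) y) *\<^sub>v x = v"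
proof -
  let ?xs = "repeat_points ys m"
  obtain b where b: "b < length ys" "ys ! b = y" using y ys by (auto simp: in_set_conv_nth)
  have refl: "lep (ys ! b) (ys ! b)" using fp y b unfolding finite_poset_def by blast
  define w where "w = vec (length ys * m)
    (\<lambda>j. if j div m = b then (if j mod m < fst M (ys ! b) then v $ (j mod m) else 0) else 0)"
  have w: "w \<in> carrier_vec (length ?xs)" "supported_at lep ?xs y w"
    using supported_at_repeat_points_block[of b ys lep m
        "\<lambda>k. if k < fst M (ys ! b) then v $ k else 0", OF b(1) refl] b
    unfolding w_def by auto
  have "gen_mat lep M ?xs m y *\<^sub>v w = v"
    using gen_mat_surj[OF M refl b(1)] b y v dim unfolding w_def by simp
  then have "(gen_mat lep M ?xs m y * extend_mat lep ?xs y) *\<^sub>v (restrict_mat lep ?xs y *\<^sub>v w) = v"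
    using w by (simp add: assoc_mult_mat_vec[OF gen_mat_carrier(1) extend_mat_carrier(1)] extend_restrict)
  then show ?thesis using w(1) by (intro bexI[of _ "restrict_mat lep ?xs y *\<^sub>v w"]) simp_all
qed

definition proj_epi :: "'a set \<Rightarrow> ('a \<Rightarrow> 'a \<Rightarrow> bool) \<Rightarrow> ('a, 'k::field) pmod \<Rightarrow> 'a list
    \<Rightarrow> ('a \<Rightarrow> 'k mat) \<Rightarrow> bool" where
  "proj_epi X lep M xs \<epsilon> \<longleftrightarrow>
     (\<forall>y\<in>X. \<epsilon> y \<in> carrier_mat (fst M y) (length (active lep xs y)))
     \<and> (\<forall>y\<in>X. \<forall>z\<in>X. lep y z \<longrightarrow> \<epsilon> z * proj_struct lep xs y z = snd M y z * \<epsilon> y)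
     \<and> (\<forall>y\<in>X. \<forall>v\<in>carrier_vec (fst M y). \<exists>x\<in>carrier_vec (length (active lep xs y)). \<epsilon> y *\<^sub>v x = v)"

lemma proj_epi_exists:
  fixes M :: "('a, 'k::field) pmod"
  assumes fp: "finite_poset X lep" and M: "is_pmod X lep M"
  shows "\<exists>xs \<epsilon>. set xs \<subseteq> X \<and> proj_epi X lep M xs \<epsilon> \<and> kernel_closed X lep xs \<epsilon>"
proof -
  have "finite X" using fp by (simp add: finite_poset_def)
  then obtain ys where ys: "set ys = X" using finite_list by blast
  define m where "m = (\<Sum>y\<in>X. fst M y)"
  define xs where "xs = repeat_points ys m"
  define \<epsilon> where "\<epsilon> y = gen_mat lep M xs m y * extend_mat lep xs y" for y
  have xs: "set xs \<subseteq> X" using set_repeat_points[of ys m] ys unfolding xs_def by simp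
  have \<epsilon>: "\<epsilon> y \<in> carrier_mat (fst M y) (length (active lep xs y))" for y
    unfolding \<epsilon>_def using gen_mat_carrier(1) extend_mat_carrier(1) by (rule mult_carrier_mat)
  have Mc: "snd M y z \<in> carrier_mat (fst M z) (fst M y)" if "y \<in> X" "z \<in> X" "lep y z" for y z
    using M that unfolding is_pmod_def by blast
  have natural: "\<epsilon> z * proj_struct lep xs y z = snd M y z * \<epsilon> y"
    if "y \<in> X" "z \<in> X" "lep y z" for y z
    unfolding \<epsilon>_def using gen_mat_extend_natural[OF fp M xs that] .
  have "fst M y \<le> m" if "y \<in> X" for y
    unfolding m_def using \<open>finite X\<close> that by (intro member_le_sum) auto
  then have "\<exists>x\<in>carrier_vec (length (active lep xs y)). \<epsilon> y *\<^sub>v x = v"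
    if "y \<in> X" "v \<in> carrier_vec (fst M y)" for y v
    unfolding \<epsilon>_def xs_def using gen_mat_extend_surj[OF fp M ys] that by blast
  then have "proj_epi X lep M xs \<epsilon>"
    by (simp add: proj_epi_def \<epsilon> natural)
  moreover have "kernel_closed X lep xs \<epsilon>"
    using \<epsilon> Mc natural by (intro kernel_closed_if_natural[where T = "snd M"])
  ultimately show ?thesis using xs by blast
qed

text \<open>The transpose of \<open>stack_mat ys m B\<close> is the block row \<open>[B(ys!0) \<dots> B(ys!(length ys - 1))]\<close>.\<close>

definition stack_mat :: "'a list \<Rightarrow> nat \<Rightarrow> ('a \<Rightarrow> 'k::field mat) \<Rightarrow> 'k mat" where
  "stack_mat ys m B = mat (length ys * m) m (\<lambda>(j', j). B (ys ! (j' div m)) $$ (j, j' mod m))"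

lemma stack_mat_carrier [simp]:
  "stack_mat ys m B \<in> carrier_mat (length ys * m) m"
  "dim_row (stack_mat ys m B) = length ys * m"
  "dim_col (stack_mat ys m B) = m"
  by (simp_all add: stack_mat_def)

lemma transpose_stack_mat_mult_unit_vec:
  assumes B: "\<forall>y\<in>set ys. B y \<in> carrier_mat m m" and j': "j' < length ys * m"
  shows "(stack_mat ys m B)\<^sup>T *\<^sub>v unit_vec (length ys * m) j'
    = B (ys ! (j' div m)) *\<^sub>v unit_vec m (j' mod m)"
proof -
  have "ys ! (j' div m) \<in> set ys" using j' by (simp add: less_mult_imp_div_less)
  then have Bj: "B (ys ! (j' div m)) \<in> carrier_mat m m" using B by blast
  have mod: "j' mod m < m" using j' by (cases "m = 0") auto
  show ?thesis
  proof (rule eq_vecI)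
    fix j assume "j < dim_vec (B (ys ! (j' div m)) *\<^sub>v unit_vec m (j' mod m))"
    then have j: "j < m" using Bj by simp
    show "((stack_mat ys m B)\<^sup>T *\<^sub>v unit_vec (length ys * m) j') $ j
        = (B (ys ! (j' div m)) *\<^sub>v unit_vec m (j' mod m)) $ j"
      using j j' mod mult_mat_vec_unit_vec_index[OF Bj mod j]
        mult_mat_vec_unit_vec_index[of "(stack_mat ys m B)\<^sup>T" m "length ys * m" j' j]
      by (simp add: stack_mat_def)
  qed (use Bj in simp)
qed

lemma transpose_stack_mat_mult_block:
  assumes b: "b < length ys" and B: "B (ys ! b) \<in> carrier_mat m m" and w: "w \<in> carrier_vec m"
  shows "(stack_mat ys m B)\<^sup>T *\<^sub>v vec (length ys * m) (\<lambda>j. if j div m = b then w $ (j mod m) else 0)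
    = B (ys ! b) *\<^sub>v w"
proof (rule eq_vecI)
  fix j assume "j < dim_vec (B (ys ! b) *\<^sub>v w)"
  then have j: "j < m" using B by simp
  have "((stack_mat ys m B)\<^sup>T *\<^sub>v vec (length ys * m) (\<lambda>j. if j div m = b then w $ (j mod m) else 0)) $ j
      = (\<Sum>j'<length ys * m. if j' div m = b then B (ys ! b) $$ (j, j' mod m) * w $ (j' mod m) else 0)"
    using j by (subst mult_mat_vec_index_sum) (auto simp: stack_mat_def intro!: sum.cong)
  also have "\<dots> = (\<Sum>k<m. B (ys ! b) $$ (j, k) * w $ k)"
    by (rule sum_block[OF b])
  also have "\<dots> = (B (ys ! b) *\<^sub>v w) $ j"
    using j B w by (subst mult_mat_vec_index_sum) auto
  finally show "((stack_mat ys m B)\<^sup>T *\<^sub>v vec (length ys * m)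
      (\<lambda>j. if j div m = b then w $ (j mod m) else 0)) $ j = (B (ys ! b) *\<^sub>v w) $ j" .
qed (use B in simp)

lemma order_compatible_stack_mat:
  assumes B: "\<forall>y\<in>set ys. B y \<in> carrier_mat (length xs) (length xs)"
    and supp: "\<forall>y\<in>set ys. \<forall>w\<in>carrier_vec (length xs). supported_at lep xs y (B y *\<^sub>v w)"
  shows "order_compatible lep xs (repeat_points ys (length xs)) (stack_mat ys (length xs) B)"
  unfolding order_compatible_def
proof (intro allI impI)
  let ?m = "length xs"
  fix r c assume r: "r < length (repeat_points ys ?m)" and c: "c < ?m"
    and not_le: "\<not> lep (xs ! c) (repeat_points ys ?m ! r)"
  have y: "ys ! (r div ?m) \<in> set ys" using r by (simp add: less_mult_imp_div_less)
  have mod: "r mod ?m < ?m" using c by (cases ?m) auto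
  have "stack_mat ys ?m B $$ (r, c) = (B (ys ! (r div ?m)) *\<^sub>v unit_vec ?m (r mod ?m)) $ c"
    using r c mult_mat_vec_unit_vec_index[OF bspec[OF B y] mod c] by (simp add: stack_mat_def)
  also have "\<dots> = 0"
  proof -
    have "supported_at lep xs (ys ! (r div ?m)) (B (ys ! (r div ?m)) *\<^sub>v unit_vec ?m (r mod ?m))"
      using supp y by simp
    then show ?thesis using not_le r c unfolding supported_at_def by (auto simp: nth_repeat_points)
  qed
  finally show "stack_mat ys ?m B $$ (r, c) = 0" .
qed

lemma extend_mat_mult_unit_vec:
  assumes "c < length (active lep xs y)"
  shows "extend_mat lep xs y *\<^sub>v unit_vec (length (active lep xs y)) c
    = unit_vec (length xs) (active lep xs y ! c)"
proof (rule eq_vecI)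
  fix j assume "j < dim_vec (unit_vec (length xs) (active lep xs y ! c))"
  then have j: "j < length xs" by simp
  have "(extend_mat lep xs y *\<^sub>v unit_vec (length (active lep xs y)) c) $ j
      = extend_mat lep xs y $$ (j, c)"
    by (rule mult_mat_vec_unit_vec_index[OF extend_mat_carrier(1) assms j])
  also have "\<dots> = unit_vec (length xs) (active lep xs y ! c) $ j"
    using j assms active_nth_less[OF assms] by (simp add: extend_mat_def)
  finally show "(extend_mat lep xs y *\<^sub>v unit_vec (length (active lep xs y)) c) $ j
      = unit_vec (length xs) (active lep xs y ! c) $ j" .
qed simp

lemma mat_morph_at_stack_mat_unit_vec:
  fixes xs ys :: "'a list" and B :: "'a \<Rightarrow> 'k::field mat"
  defines "m \<equiv> length xs"
  defines "xs' \<equiv> repeat_points ys m"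
  assumes B: "\<forall>y\<in>set ys. B y \<in> carrier_mat m m" and c: "c < length (active lep xs' y)"
  shows "mat_morph_at lep xs' xs (stack_mat ys m B) y *\<^sub>v unit_vec (length (active lep xs' y)) c
    = restrict_mat lep xs y *\<^sub>v (B (xs' ! (active lep xs' y ! c)) *\<^sub>v unit_vec m (active lep xs' y ! c mod m))"
proof -
  let ?j = "active lep xs' y ! c"
  have j: "?j < length ys * m" using active_nth_less[OF c] by (simp add: xs'_def)
  show ?thesis
    using j c B
    by (simp add: mat_morph_at_mult_vec m_def xs'_def extend_mat_mult_unit_vec
        transpose_stack_mat_mult_unit_vec nth_repeat_points)
qed

lemma mat_morph_at_stack_mat_block:
  fixes xs ys :: "'a list" and B :: "'a \<Rightarrow> 'k::field mat"
  defines "m \<equiv> length xs"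
  defines "xs' \<equiv> repeat_points ys m"
  assumes b: "b < length ys" and refl: "lep (ys ! b) (ys ! b)"
    and B: "B (ys ! b) \<in> carrier_mat m m" and w: "w \<in> carrier_vec m"
  shows "mat_morph_at lep xs' xs (stack_mat ys m B) (ys ! b) *\<^sub>v
      (restrict_mat lep xs' (ys ! b) *\<^sub>v vec (length ys * m) (\<lambda>j. if j div m = b then w $ (j mod m) else 0))
    = restrict_mat lep xs (ys ! b) *\<^sub>v (B (ys ! b) *\<^sub>v w)"
proof -
  let ?z = "vec (length ys * m) (\<lambda>j. if j div m = b then w $ (j mod m) else 0)"
  have z: "?z \<in> carrier_vec (length xs')" "supported_at lep xs' (ys ! b) ?z"
    using supported_at_repeat_points_block[of b ys lep m "\<lambda>k. w $ k", OF b refl]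
    by (auto simp: xs'_def)
  then show ?thesis
    using transpose_stack_mat_mult_block[where B = B, OF b B w]
    by (simp add: mat_morph_at_mult_vec m_def xs'_def extend_restrict)
qed

definition kernel_generators :: "'a set \<Rightarrow> ('a \<Rightarrow> 'a \<Rightarrow> bool) \<Rightarrow> 'a list \<Rightarrow> ('a \<Rightarrow> 'k::field mat)
    \<Rightarrow> ('a \<Rightarrow> 'k mat) \<Rightarrow> bool" where
  "kernel_generators X lep xs \<phi> K \<longleftrightarrow> (\<forall>y\<in>X.
     K y \<in> carrier_mat (length (active lep xs y)) (length (active lep xs y))
     \<and> (\<forall>w\<in>carrier_vec (length (active lep xs y)). \<phi> y *\<^sub>v (K y *\<^sub>v w) = 0\<^sub>v (dim_row (\<phi> y)))
     \<and> (\<forall>x\<in>carrier_vec (length (active lep xs y)). \<phi> y *\<^sub>v x = 0\<^sub>v (dim_row (\<phi> y))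
          \<longrightarrow> (\<exists>w\<in>carrier_vec (length (active lep xs y)). x = K y *\<^sub>v w)))"

lemma kernel_generators_exist:
  fixes \<phi> :: "'a \<Rightarrow> 'k::field mat"
  assumes "\<forall>y\<in>X. dim_col (\<phi> y) = length (active lep xs y)"
  shows "\<exists>K. kernel_generators X lep xs \<phi> K"
proof -
  have "\<forall>y\<in>X. \<exists>K \<in> carrier_mat (length (active lep xs y)) (length (active lep xs y)).
      (\<forall>w\<in>carrier_vec (length (active lep xs y)). \<phi> y *\<^sub>v (K *\<^sub>v w) = 0\<^sub>v (dim_row (\<phi> y)))
    \<and> (\<forall>x\<in>carrier_vec (length (active lep xs y)). \<phi> y *\<^sub>v x = 0\<^sub>v (dim_row (\<phi> y))
          \<longrightarrow> (\<exists>w\<in>carrier_vec (length (active lep xs y)). x = K *\<^sub>v w))"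
    using assms by (auto intro!: kernel_as_image_mat carrier_matI)
  then show ?thesis unfolding kernel_generators_def Bex_def by (rule bchoice)
qed

definition kernel_cover :: "'a set \<Rightarrow> ('a \<Rightarrow> 'a \<Rightarrow> bool) \<Rightarrow> 'a list \<Rightarrow> ('a \<Rightarrow> 'k::field mat)
    \<Rightarrow> 'a list \<Rightarrow> 'k mat \<Rightarrow> bool" where
  "kernel_cover X lep xs \<phi> xs' A \<longleftrightarrow> set xs' \<subseteq> X
     \<and> A \<in> carrier_mat (length xs') (length xs) \<and> order_compatible lep xs xs' A
     \<and> (\<forall>y\<in>X. exact_at (length (active lep xs' y)) (length (active lep xs y)) (dim_row (\<phi> y))
           (mat_morph_at lep xs' xs A y) (\<phi> y))"

definition lift_mat :: "('a \<Rightarrow> 'a \<Rightarrow> bool) \<Rightarrow> 'a list \<Rightarrow> 'a \<Rightarrow> 'k::field mat \<Rightarrow> 'k mat" where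
  "lift_mat lep xs y K = extend_mat lep xs y * K * restrict_mat lep xs y"

lemma lift_mat_carrier:
  "K \<in> carrier_mat (length (active lep xs y)) (length (active lep xs y)) \<Longrightarrow>
    lift_mat lep xs y K \<in> carrier_mat (length xs) (length xs)"
  unfolding lift_mat_def by (auto intro!: mult_carrier_mat)

lemma lift_mat_mult_vec:
  assumes K: "K \<in> carrier_mat (length (active lep xs y)) (length (active lep xs y))"
    and w: "w \<in> carrier_vec (length xs)"
  shows "lift_mat lep xs y K *\<^sub>v w = extend_mat lep xs y *\<^sub>v (K *\<^sub>v (restrict_mat lep xs y *\<^sub>v w))"
  unfolding lift_mat_def
  using assoc_mult_mat_vec[OF mult_carrier_mat[OF extend_mat_carrier(1) K] restrict_mat_carrier(1) w]
    assoc_mult_mat_vec[OF extend_mat_carrier(1) K restrict_mat_mult_vec_carrier[OF w]]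
  by simp

lemma kernel_sub_image_stack_mat:
  fixes \<phi> K :: "'a \<Rightarrow> 'k::field mat"
  assumes fp: "finite_poset X lep" and ys: "set ys = X" and K: "kernel_generators X lep xs \<phi> K"
    and y: "y \<in> X" and x: "x \<in> carrier_vec (length (active lep xs y))"
    and ker: "\<phi> y *\<^sub>v x = 0\<^sub>v (dim_row (\<phi> y))"
  shows "\<exists>z\<in>carrier_vec (length (active lep (repeat_points ys (length xs)) y)).
    x = mat_morph_at lep (repeat_points ys (length xs)) xs
      (stack_mat ys (length xs) (\<lambda>y. lift_mat lep xs y (K y))) y *\<^sub>v z"
proof -
  let ?m = "length xs" and ?B = "\<lambda>y. lift_mat lep xs y (K y)"
  have Ky: "K y \<in> carrier_mat (length (active lep xs y)) (length (active lep xs y))"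
    using K y unfolding kernel_generators_def by blast
  obtain w where w: "w \<in> carrier_vec (length (active lep xs y))" "x = K y *\<^sub>v w"
    using K y x ker unfolding kernel_generators_def by blast
  obtain b where b: "b < length ys" "ys ! b = y" using y ys by (auto simp: in_set_conv_nth)
  have refl: "lep (ys ! b) (ys ! b)" using fp y b unfolding finite_poset_def by blast
  define u where "u = extend_mat lep xs y *\<^sub>v w"
  define z where "z = restrict_mat lep (repeat_points ys ?m) y *\<^sub>v
    vec (length ys * ?m) (\<lambda>j. if j div ?m = b then u $ (j mod ?m) else 0)"
  have "mat_morph_at lep (repeat_points ys ?m) xs (stack_mat ys ?m ?B) y *\<^sub>v z
      = restrict_mat lep xs y *\<^sub>v (?B y *\<^sub>v u)"
    unfolding z_def
    using mat_morph_at_stack_mat_block[where lep = lep and xs = xs and B = ?B and w = u, OF b(1) refl]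
      lift_mat_carrier[OF Ky] w b(2) by (simp add: u_def)
  also have "\<dots> = x"
    using w Ky by (simp add: u_def lift_mat_mult_vec restrict_extend)
  finally have "x = mat_morph_at lep (repeat_points ys ?m) xs (stack_mat ys ?m ?B) y *\<^sub>v z" by simp
  moreover have "z \<in> carrier_vec (length (active lep (repeat_points ys ?m) y))" unfolding z_def by simp
  ultimately show ?thesis by blast
qed

text \<open>The generator of a copy of \<open>k[P]\<^sub>x\<close> maps into the kernel at \<open>x\<close>, hence at every \<open>y \<ge> x\<close>.\<close>

lemma image_sub_kernel_stack_mat:
  fixes \<phi> K :: "'a \<Rightarrow> 'k::field mat"
  assumes xs: "set xs \<subseteq> X" and ys: "set ys = X"
    and closed: "kernel_closed X lep xs \<phi>" and K: "kernel_generators X lep xs \<phi> K" and y: "y \<in> X"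
  shows "\<phi> y * mat_morph_at lep (repeat_points ys (length xs)) xs
      (stack_mat ys (length xs) (\<lambda>y. lift_mat lep xs y (K y))) y
    = 0\<^sub>m (dim_row (\<phi> y)) (length (active lep (repeat_points ys (length xs)) y))"
proof -
  let ?m = "length xs" and ?B = "\<lambda>y. lift_mat lep xs y (K y)"
  let ?xs' = "repeat_points ys ?m" and ?A = "stack_mat ys ?m ?B"
  have K_carrier: "K y \<in> carrier_mat (length (active lep xs y)) (length (active lep xs y))"
    and K_ker: "\<And>w. w \<in> carrier_vec (length (active lep xs y)) \<Longrightarrow> \<phi> y *\<^sub>v (K y *\<^sub>v w) = 0\<^sub>v (dim_row (\<phi> y))"
    if "y \<in> X" for y
    using K that unfolding kernel_generators_def by blast+
  have closed_step: "\<phi> y *\<^sub>v (proj_struct lep xs x y *\<^sub>v v) = 0\<^sub>v (dim_row (\<phi> y))"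
    if "x \<in> X" "lep x y" "v \<in> carrier_vec (length (active lep xs x))"
      "\<phi> x *\<^sub>v v = 0\<^sub>v (dim_row (\<phi> x))" for x v
    using closed y that unfolding kernel_closed_def by blast
  have \<phi>: "\<phi> y \<in> carrier_mat (dim_row (\<phi> y)) (length (active lep xs y))"
    using closed y unfolding kernel_closed_def by (auto intro: carrier_matI)
  have B: "\<forall>y\<in>set ys. ?B y \<in> carrier_mat ?m ?m" using ys K_carrier by (auto intro: lift_mat_carrier)
  show ?thesis
  proof (rule mat_eq_unit_vecI)
    fix c assume c: "c < length (active lep ?xs' y)"
    let ?j = "active lep ?xs' y ! c"
    let ?x = "?xs' ! ?j" and ?e = "unit_vec ?m (?j mod ?m)"
    have x: "?x \<in> X" "lep ?x y"
      using nth_mem[OF active_nth_less[OF c]] set_repeat_points[of ys ?m] ys active_nth_le[OF c]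
      by auto
    have Ke: "K ?x *\<^sub>v (restrict_mat lep xs ?x *\<^sub>v ?e) \<in> carrier_vec (length (active lep xs ?x))"
      using K_carrier[OF x(1)] by simp
    have "mat_morph_at lep ?xs' xs ?A y *\<^sub>v unit_vec (length (active lep ?xs' y)) c
        = restrict_mat lep xs y *\<^sub>v (?B ?x *\<^sub>v ?e)"
      using B c by (rule mat_morph_at_stack_mat_unit_vec)
    then have "(\<phi> y * mat_morph_at lep ?xs' xs ?A y) *\<^sub>v unit_vec (length (active lep ?xs' y)) c
        = \<phi> y *\<^sub>v (restrict_mat lep xs y *\<^sub>v (?B ?x *\<^sub>v ?e))"
      using assoc_mult_mat_vec[OF \<phi> mat_morph_at_carrier(1) unit_vec_carrier] by simp
    also have "\<dots> = \<phi> y *\<^sub>v (proj_struct lep xs ?x y *\<^sub>v (K ?x *\<^sub>v (restrict_mat lep xs ?x *\<^sub>v ?e)))"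
      using K_carrier[OF x(1)] Ke by (simp add: lift_mat_mult_vec proj_struct_mult_vec)
    also have "\<dots> = 0\<^sub>v (dim_row (\<phi> y))"
      using closed_step[OF x Ke K_ker[OF x(1) restrict_mat_mult_vec_carrier[OF unit_vec_carrier]]] .
    finally show "(\<phi> y * mat_morph_at lep ?xs' xs ?A y) *\<^sub>v unit_vec (length (active lep ?xs' y)) c
        = 0\<^sub>m (dim_row (\<phi> y)) (length (active lep ?xs' y)) *\<^sub>v unit_vec (length (active lep ?xs' y)) c"
      by (simp add: zero_mat_mult_vec)
  next
    show "\<phi> y * mat_morph_at lep ?xs' xs ?A y
        \<in> carrier_mat (dim_row (\<phi> y)) (length (active lep ?xs' y))"
      using \<phi> mat_morph_at_carrier(1) by (rule mult_carrier_mat)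
  qed simp
qed

lemma kernel_cover_stack_mat:
  fixes \<phi> K :: "'a \<Rightarrow> 'k::field mat"
  assumes fp: "finite_poset X lep" and xs: "set xs \<subseteq> X" and ys: "set ys = X"
    and closed: "kernel_closed X lep xs \<phi>" and K: "kernel_generators X lep xs \<phi> K"
  shows "kernel_cover X lep xs \<phi> (repeat_points ys (length xs))
    (stack_mat ys (length xs) (\<lambda>y. lift_mat lep xs y (K y)))"
proof -
  let ?m = "length xs" and ?B = "\<lambda>y. lift_mat lep xs y (K y)"
  let ?xs' = "repeat_points ys ?m" and ?A = "stack_mat ys ?m ?B"
  have K_carrier: "K y \<in> carrier_mat (length (active lep xs y)) (length (active lep xs y))"
    if "y \<in> X" for y
    using K that unfolding kernel_generators_def by blast
  have "exact_at (length (active lep ?xs' y)) (length (active lep xs y)) (dim_row (\<phi> y))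
      (mat_morph_at lep ?xs' xs ?A y) (\<phi> y)" if y: "y \<in> X" for y
    unfolding exact_at_def
  proof (intro ballI iffI)
    fix x assume "x \<in> carrier_vec (length (active lep xs y))"
      "\<exists>z\<in>carrier_vec (length (active lep ?xs' y)). x = mat_morph_at lep ?xs' xs ?A y *\<^sub>v z"
    then obtain z where z: "z \<in> carrier_vec (length (active lep ?xs' y))"
      and x: "x = mat_morph_at lep ?xs' xs ?A y *\<^sub>v z" by blast
    have "\<phi> y \<in> carrier_mat (dim_row (\<phi> y)) (length (active lep xs y))"
      using closed y unfolding kernel_closed_def by (auto intro: carrier_matI)
    then have "\<phi> y *\<^sub>v x = (\<phi> y * mat_morph_at lep ?xs' xs ?A y) *\<^sub>v z"
      unfolding x using assoc_mult_mat_vec[OF _ mat_morph_at_carrier(1) z] by simp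
    also have "\<dots> = 0\<^sub>v (dim_row (\<phi> y))"
      using image_sub_kernel_stack_mat[OF xs ys closed K y] z by (simp add: zero_mat_mult_vec)
    finally show "\<phi> y *\<^sub>v x = 0\<^sub>v (dim_row (\<phi> y))" .
  qed (simp add: kernel_sub_image_stack_mat[OF fp ys K y])
  moreover have "set ?xs' \<subseteq> X" using set_repeat_points[of ys ?m] ys by simp
  moreover have "order_compatible lep xs ?xs' ?A"
  proof (rule order_compatible_stack_mat)
    show "\<forall>y\<in>set ys. ?B y \<in> carrier_mat ?m ?m" using ys K_carrier by (auto intro: lift_mat_carrier)
    show "\<forall>y\<in>set ys. \<forall>w\<in>carrier_vec ?m. supported_at lep xs y (?B y *\<^sub>v w)"
    proof (intro ballI)
      fix y and w :: "'k vec" assume "y \<in> set ys" and w: "w \<in> carrier_vec ?m"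
      then have Ky: "K y \<in> carrier_mat (length (active lep xs y)) (length (active lep xs y))"
        using ys K_carrier by simp
      show "supported_at lep xs y (?B y *\<^sub>v w)"
        unfolding lift_mat_mult_vec[OF Ky w]
        by (rule supported_at_extend[OF mult_mat_vec_carrier[OF Ky restrict_mat_mult_vec_carrier[OF w]]])
    qed
  qed
  ultimately show ?thesis unfolding kernel_cover_def by simp
qed

lemma kernel_cover_exists:
  fixes \<phi> :: "'a \<Rightarrow> 'k::field mat"
  assumes fp: "finite_poset X lep" and xs: "set xs \<subseteq> X" and closed: "kernel_closed X lep xs \<phi>"
  shows "\<exists>xs' A. kernel_cover X lep xs \<phi> xs' A"
proof -
  have "\<forall>y\<in>X. dim_col (\<phi> y) = length (active lep xs y)"
    using closed by (simp add: kernel_closed_def)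
  then obtain K where K: "kernel_generators X lep xs \<phi> K"
    using kernel_generators_exist by blast
  have "finite X" using fp by (simp add: finite_poset_def)
  then obtain ys where "set ys = X" using finite_list by blast
  then have "kernel_cover X lep xs \<phi> (repeat_points ys (length xs))
      (stack_mat ys (length xs) (\<lambda>y. lift_mat lep xs y (K y)))"
    by (rule kernel_cover_stack_mat[OF fp xs _ closed K])
  then show ?thesis by blast
qed

lemma is_proj_res_iff:
  "is_proj_res X lep M E D \<longleftrightarrow> (\<forall>i. set (E i) \<subseteq> X)
     \<and> (\<forall>i. D i \<in> carrier_mat (length (E (Suc i))) (length (E i)))
     \<and> (\<forall>i. order_compatible lep (E i) (E (Suc i)) (D i))
     \<and> (\<exists>\<epsilon>. proj_epi X lep M (E 0) \<epsilon>
        \<and> (\<forall>y\<in>X. exact_at (length (active lep (E 1) y)) (length (active lep (E 0) y)) (fst M y)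
              (mat_morph_at lep (E 1) (E 0) (D 0) y) (\<epsilon> y)))
     \<and> (\<forall>y\<in>X. \<forall>i. exact_at (length (active lep (E (Suc (Suc i))) y))
              (length (active lep (E (Suc i)) y)) (length (active lep (E i) y))
              (mat_morph_at lep (E (Suc (Suc i))) (E (Suc i)) (D (Suc i)) y)
              (mat_morph_at lep (E (Suc i)) (E i) (D i) y))"
  unfolding is_proj_res_def proj_epi_def order_compatible_def by auto

lemma proj_res_exists:
  fixes M :: "('a, 'k::field) pmod"
  assumes fp: "finite_poset X lep" and M: "is_pmod X lep M"
  shows "\<exists>E D. is_proj_res X lep M E D"
proof -
  obtain E0 \<epsilon> where E0: "set E0 \<subseteq> X" and epi: "proj_epi X lep M E0 \<epsilon>"
    and closed: "kernel_closed X lep E0 \<epsilon>"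
    using proj_epi_exists[OF fp M] by blast
  \<comment> \<open>A stage \<open>(xs, \<phi>, A)\<close>: summands \<open>xs\<close>, the map \<open>\<phi>\<close> whose kernel the next stage covers,
    and the matrix \<open>A\<close> into the previous stage (arbitrary at stage \<open>0\<close>).\<close>
  define P where "P n s \<longleftrightarrow> set (fst s) \<subseteq> X \<and> kernel_closed X lep (fst s) (fst (snd s))
    \<and> (n = 0 \<longrightarrow> fst s = E0 \<and> fst (snd s) = \<epsilon>)"
    for n :: nat and s :: "'a list \<times> ('a \<Rightarrow> 'k mat) \<times> 'k mat"
  define Q where "Q s t \<longleftrightarrow> kernel_cover X lep (fst s) (fst (snd s)) (fst t) (snd (snd t))
    \<and> fst (snd t) = mat_morph_at lep (fst t) (fst s) (snd (snd t))"
    for s t :: "'a list \<times> ('a \<Rightarrow> 'k mat) \<times> 'k mat"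
  have "\<exists>f. \<forall>n. P n (f n) \<and> Q (f n) (f (Suc n))"
  proof (rule dependent_nat_choice)
    show "\<exists>s. P 0 s" using E0 closed unfolding P_def by (intro exI[of _ "(E0, \<epsilon>, 0\<^sub>m 0 0)"]) simp
  next
    fix s and n :: nat assume "P n s"
    then obtain xs' A where cover: "kernel_cover X lep (fst s) (fst (snd s)) xs' A"
      using kernel_cover_exists[OF fp] unfolding P_def by blast
    then have "kernel_closed X lep xs' (mat_morph_at lep xs' (fst s) A)"
      using \<open>P n s\<close> kernel_closed_mat_morph_at[OF fp] unfolding P_def kernel_cover_def by blast
    then show "\<exists>t. P (Suc n) t \<and> Q s t"
      using cover unfolding P_def Q_def kernel_cover_def
      by (intro exI[of _ "(xs', mat_morph_at lep xs' (fst s) A, A)"]) simp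
  qed
  then obtain f where P: "\<And>n. P n (f n)" and Q: "\<And>n. Q (f n) (f (Suc n))" by blast
  define E where "E i = fst (f i)" for i
  define D where "D i = snd (snd (f (Suc i)))" for i
  have cover: "kernel_cover X lep (E i) (fst (snd (f i))) (E (Suc i)) (D i)" for i
    using Q[of i] unfolding Q_def E_def D_def by simp
  have \<epsilon>: "fst (snd (f 0)) = \<epsilon>" and E_0: "E 0 = E0" using P[of 0] unfolding P_def E_def by simp_all
  have \<phi>_Suc: "fst (snd (f (Suc i))) = mat_morph_at lep (E (Suc i)) (E i) (D i)" for i
    using Q[of i] unfolding Q_def E_def D_def by simp
  have "is_proj_res X lep M E D"
    unfolding is_proj_res_iff
  proof (intro conjI allI ballI exI[of _ \<epsilon>])
    fix i
    show "set (E i) \<subseteq> X" using P[of i] unfolding P_def E_def by simp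
    show "D i \<in> carrier_mat (length (E (Suc i))) (length (E i))"
      and "order_compatible lep (E i) (E (Suc i)) (D i)"
      using cover[of i] unfolding kernel_cover_def by simp_all
  next
    show "proj_epi X lep M (E 0) \<epsilon>" using epi E_0 by simp
  next
    fix y assume y: "y \<in> X"
    then have "dim_row (\<epsilon> y) = fst M y" using epi unfolding proj_epi_def by auto
    then show "exact_at (length (active lep (E 1) y)) (length (active lep (E 0) y)) (fst M y)
        (mat_morph_at lep (E 1) (E 0) (D 0) y) (\<epsilon> y)"
      using cover[of 0] y \<epsilon> unfolding kernel_cover_def by auto
  next
    fix y i assume y: "y \<in> X"
    show "exact_at (length (active lep (E (Suc (Suc i))) y)) (length (active lep (E (Suc i)) y))
        (length (active lep (E i) y)) (mat_morph_at lep (E (Suc (Suc i))) (E (Suc i)) (D (Suc i)) y)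
        (mat_morph_at lep (E (Suc i)) (E i) (D i) y)"
      using cover[of "Suc i"] y \<phi>_Suc[of i] unfolding kernel_cover_def by auto
  qed
  then show ?thesis by blast
qed

lemma invertible_mat_bij:
  fixes A :: "'k::field mat"
  assumes A: "A \<in> carrier_mat n' n" and inv: "invertible_mat A"
  shows "\<forall>v\<in>carrier_vec n'. \<exists>w\<in>carrier_vec n. A *\<^sub>v w = v"
    and "\<forall>w\<in>carrier_vec n. A *\<^sub>v w = 0\<^sub>v n' \<longleftrightarrow> w = 0\<^sub>v n"
proof -
  obtain B where "square_mat A" and AB: "A * B = 1\<^sub>m (dim_row A)" and BA: "B * A = 1\<^sub>m (dim_row B)"
    using inv unfolding invertible_mat_def inverts_mat_def by blast
  then have n': "n' = n" using A by (auto simp: square_mat.simps)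
  have "dim_col B = n" using AB A n' by (metis index_mult_mat(3) index_one_mat(3) carrier_matD(1))
  moreover have "dim_row B = n" using BA A by (metis index_mult_mat(3) index_one_mat(3) carrier_matD(2))
  ultimately have B: "B \<in> carrier_mat n n" by auto
  have AB': "A * B = 1\<^sub>m n" and BA': "B * A = 1\<^sub>m n" using AB BA A B n' by auto
  show "\<forall>v\<in>carrier_vec n'. \<exists>w\<in>carrier_vec n. A *\<^sub>v w = v"
  proof
    fix v :: "'k vec" assume "v \<in> carrier_vec n'"
    then show "\<exists>w\<in>carrier_vec n. A *\<^sub>v w = v"
      using A B AB' n' by (intro bexI[of _ "B *\<^sub>v v"]) (auto simp flip: assoc_mult_mat_vec)
  qed
  show "\<forall>w\<in>carrier_vec n. A *\<^sub>v w = 0\<^sub>v n' \<longleftrightarrow> w = 0\<^sub>v n"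
  proof (intro ballI iffI)
    fix w :: "'k vec" assume w: "w \<in> carrier_vec n" and "A *\<^sub>v w = 0\<^sub>v n'"
    then have "B *\<^sub>v (A *\<^sub>v w) = 0\<^sub>v n" using B n' by auto
    have "w = (B * A) *\<^sub>v w" using BA' w by simp
    also have "\<dots> = B *\<^sub>v (A *\<^sub>v w)" using A B w n' by (simp add: assoc_mult_mat_vec)
    finally show "w = 0\<^sub>v n" using \<open>B *\<^sub>v (A *\<^sub>v w) = 0\<^sub>v n\<close> by simp
  qed (use A in auto)
qed

lemma exact_at_cong_kernel:
  assumes "\<forall>x\<in>carrier_vec v. A *\<^sub>v x = 0\<^sub>v w \<longleftrightarrow> A' *\<^sub>v x = 0\<^sub>v w'"
  shows "exact_at u v w B A = exact_at u v w' B A'"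
  using assms by (simp add: exact_at_def)

lemma proj_epi_iso:
  fixes M N :: "('a, 'k::field) pmod"
  assumes M: "is_pmod X lep M" and N: "is_pmod X lep N"
    and \<phi>: "\<And>y. y \<in> X \<Longrightarrow> \<phi> y \<in> carrier_mat (fst N y) (fst M y)"
    and \<phi>_inv: "\<And>y. y \<in> X \<Longrightarrow> invertible_mat (\<phi> y)"
    and \<phi>_nat: "\<And>y z. y \<in> X \<Longrightarrow> z \<in> X \<Longrightarrow> lep y z \<Longrightarrow> \<phi> z * snd M y z = snd N y z * \<phi> y"
    and epi: "proj_epi X lep M xs \<epsilon>"
  shows "proj_epi X lep N xs (\<lambda>y. \<phi> y * \<epsilon> y)"
proof -
  let ?n = "\<lambda>y. length (active lep xs y)"
  have \<epsilon>: "\<epsilon> y \<in> carrier_mat (fst M y) (?n y)"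
    and \<epsilon>_nat: "\<And>z. z \<in> X \<Longrightarrow> lep y z \<Longrightarrow> \<epsilon> z * proj_struct lep xs y z = snd M y z * \<epsilon> y"
    and \<epsilon>_surj: "\<forall>v\<in>carrier_vec (fst M y). \<exists>x\<in>carrier_vec (?n y). \<epsilon> y *\<^sub>v x = v"
    if "y \<in> X" for y
    using epi that unfolding proj_epi_def by blast+
  have Mc: "snd M y z \<in> carrier_mat (fst M z) (fst M y)"
    and Nc: "snd N y z \<in> carrier_mat (fst N z) (fst N y)"
    if "y \<in> X" "z \<in> X" "lep y z" for y z
    using M N that unfolding is_pmod_def by blast+
  show ?thesis
    unfolding proj_epi_def
  proof (intro conjI ballI impI)
    fix y assume y: "y \<in> X"
    show "\<phi> y * \<epsilon> y \<in> carrier_mat (fst N y) (?n y)" using \<phi>[OF y] \<epsilon>[OF y] by simp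
    fix v :: "'k vec" assume "v \<in> carrier_vec (fst N y)"
    then obtain w where w: "w \<in> carrier_vec (fst M y)" "\<phi> y *\<^sub>v w = v"
      using invertible_mat_bij(1)[OF \<phi>[OF y] \<phi>_inv[OF y]] by blast
    then obtain x where "x \<in> carrier_vec (?n y)" "\<epsilon> y *\<^sub>v x = w" using \<epsilon>_surj[OF y] by blast
    then show "\<exists>x\<in>carrier_vec (?n y). \<phi> y * \<epsilon> y *\<^sub>v x = v"
      using w \<phi>[OF y] \<epsilon>[OF y] by (intro bexI[of _ x]) simp_all
  next
    fix y z assume y: "y \<in> X" and z: "z \<in> X" and yz: "lep y z"
    have "\<phi> z * \<epsilon> z * proj_struct lep xs y z = \<phi> z * (snd M y z * \<epsilon> y)"
      using assoc_mult_mat[OF \<phi>[OF z] \<epsilon>[OF z] proj_struct_carrier] \<epsilon>_nat[OF y z yz] by simp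
    also have "\<dots> = (\<phi> z * snd M y z) * \<epsilon> y"
      using assoc_mult_mat[OF \<phi>[OF z] Mc[OF y z yz] \<epsilon>[OF y]] by simp
    also have "\<dots> = snd N y z * (\<phi> y * \<epsilon> y)"
      using assoc_mult_mat[OF Nc[OF y z yz] \<phi>[OF y] \<epsilon>[OF y]] \<phi>_nat[OF y z yz] by simp
    finally show "\<phi> z * \<epsilon> z * proj_struct lep xs y z = snd N y z * (\<phi> y * \<epsilon> y)" .
  qed
qed

lemma is_proj_res_iso:
  fixes M N :: "('a, 'k::field) pmod"
  assumes M: "is_pmod X lep M" and N: "is_pmod X lep N" and iso: "pmod_iso X lep M N"
    and res: "is_proj_res X lep M E D"
  shows "is_proj_res X lep N E D"
proof -
  obtain \<phi> where \<phi>: "\<And>y. y \<in> X \<Longrightarrow> \<phi> y \<in> carrier_mat (fst N y) (fst M y)"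
    and \<phi>_inv: "\<And>y. y \<in> X \<Longrightarrow> invertible_mat (\<phi> y)"
    and \<phi>_nat: "\<And>y z. y \<in> X \<Longrightarrow> z \<in> X \<Longrightarrow> lep y z \<Longrightarrow> \<phi> z * snd M y z = snd N y z * \<phi> y"
    using iso unfolding pmod_iso_def by blast
  obtain \<epsilon> where epi: "proj_epi X lep M (E 0) \<epsilon>"
    and exact0: "\<forall>y\<in>X. exact_at (length (active lep (E 1) y)) (length (active lep (E 0) y)) (fst M y)
      (mat_morph_at lep (E 1) (E 0) (D 0) y) (\<epsilon> y)"
    using res unfolding is_proj_res_iff by blast
  have "exact_at (length (active lep (E 1) y)) (length (active lep (E 0) y)) (fst N y)
      (mat_morph_at lep (E 1) (E 0) (D 0) y) (\<phi> y * \<epsilon> y)" if y: "y \<in> X" for y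
  proof -
    have \<epsilon>: "\<epsilon> y \<in> carrier_mat (fst M y) (length (active lep (E 0) y))"
      using epi y unfolding proj_epi_def by blast
    have "\<forall>x\<in>carrier_vec (length (active lep (E 0) y)).
        \<epsilon> y *\<^sub>v x = 0\<^sub>v (fst M y) \<longleftrightarrow> (\<phi> y * \<epsilon> y) *\<^sub>v x = 0\<^sub>v (fst N y)"
      using invertible_mat_bij(2)[OF \<phi>[OF y] \<phi>_inv[OF y]] \<phi>[OF y] \<epsilon> by simp
    then show ?thesis using exact0 y exact_at_cong_kernel by blast
  qed
  then show ?thesis
    using res proj_epi_iso[OF M N \<phi> \<phi>_inv \<phi>_nat epi] unfolding is_proj_res_iff by blast
qed

section \<open>Pulling resolutions back along Galois connections\<close>

lemma active_map_left_adjoint: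
  assumes adj: "\<forall>u\<in>Q. \<forall>x\<in>P. lep (f u) x \<longleftrightarrow> leQ u (g x)" and "set xs \<subseteq> Q" "y \<in> P"
  shows "active lep (map f xs) y = active leQ xs (g y)"
  unfolding active_def using assms by (auto intro!: filter_cong dest!: nth_mem)

lemma proj_struct_map_left_adjoint:
  assumes "\<forall>u\<in>Q. \<forall>x\<in>P. lep (f u) x \<longleftrightarrow> leQ u (g x)" and "set xs \<subseteq> Q" "y \<in> P" "z \<in> P"
  shows "proj_struct lep (map f xs) y z = proj_struct leQ xs (g y) (g z)"
  using assms by (simp add: proj_struct_def active_map_left_adjoint)

lemma mat_morph_at_map_left_adjoint:
  assumes "\<forall>u\<in>Q. \<forall>x\<in>P. lep (f u) x \<longleftrightarrow> leQ u (g x)" and "set xs \<subseteq> Q" "set xs' \<subseteq> Q" "y \<in> P"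
  shows "mat_morph_at lep (map f xs') (map f xs) A y = mat_morph_at leQ xs' xs A (g y)"
  using assms by (simp add: mat_morph_at_def active_map_left_adjoint)

lemma is_pmod_pullback:
  assumes g: "monotone_betw P lep Q leQ g" and \<Gamma>: "is_pmod Q leQ \<Gamma>"
  shows "is_pmod P lep (pullback g \<Gamma>)"
proof -
  have "g x \<in> Q" and "\<And>y. y \<in> P \<Longrightarrow> lep x y \<Longrightarrow> leQ (g x) (g y)" if "x \<in> P" for x
    using g that unfolding monotone_betw_def by auto
  then show ?thesis
    using \<Gamma> unfolding is_pmod_def pullback_def by simp
qed

lemma is_proj_res_pullback:
  fixes \<Gamma> :: "('q, 'k::field) pmod"
  assumes f: "monotone_betw Q leQ P lep f" and g: "monotone_betw P lep Q leQ g"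
    and adj: "\<forall>u\<in>Q. \<forall>x\<in>P. lep (f u) x \<longleftrightarrow> leQ u (g x)"
    and res: "is_proj_res Q leQ \<Gamma> E D"
  shows "is_proj_res P lep (pullback g \<Gamma>) (\<lambda>i. map f (E i)) D"
proof -
  have EQ: "set (E i) \<subseteq> Q" for i using res unfolding is_proj_res_iff by blast
  have gQ: "g y \<in> Q" and g_mono: "\<And>z. z \<in> P \<Longrightarrow> lep y z \<Longrightarrow> leQ (g y) (g z)" if "y \<in> P" for y
    using g that unfolding monotone_betw_def by auto
  note active_map = active_map_left_adjoint[OF adj EQ]
    and proj_struct_map = proj_struct_map_left_adjoint[OF adj EQ]
    and mat_morph_at_map = mat_morph_at_map_left_adjoint[OF adj EQ EQ]
  obtain \<epsilon> where epi: "proj_epi Q leQ \<Gamma> (E 0) \<epsilon>"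
    and exact0: "\<forall>y\<in>Q. exact_at (length (active leQ (E 1) y)) (length (active leQ (E 0) y)) (fst \<Gamma> y)
      (mat_morph_at leQ (E 1) (E 0) (D 0) y) (\<epsilon> y)"
    using res unfolding is_proj_res_iff by blast
  show ?thesis
    unfolding is_proj_res_iff
  proof (intro conjI allI ballI exI[of _ "\<lambda>y. \<epsilon> (g y)"])
    fix j
    show "set (map f (E j)) \<subseteq> P" using f EQ[of j] unfolding monotone_betw_def by auto
    show "D j \<in> carrier_mat (length (map f (E (Suc j)))) (length (map f (E j)))"
      using res unfolding is_proj_res_iff by simp
    have "\<And>a b. a \<in> Q \<Longrightarrow> b \<in> Q \<Longrightarrow> leQ a b \<Longrightarrow> lep (f a) (f b)"
      using f unfolding monotone_betw_def by blast
    then show "order_compatible lep (map f (E j)) (map f (E (Suc j))) (D j)"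
      using res EQ[of j] EQ[of "Suc j"] unfolding is_proj_res_iff order_compatible_def
      by (simp add: subset_iff) (meson nth_mem)
  next
    show "proj_epi P lep (pullback g \<Gamma>) (map f (E 0)) (\<lambda>y. \<epsilon> (g y))"
      using epi gQ g_mono by (simp add: proj_epi_def pullback_def active_map proj_struct_map)
  next
    fix y assume "y \<in> P"
    then show "exact_at (length (active lep (map f (E 1)) y)) (length (active lep (map f (E 0)) y))
        (fst (pullback g \<Gamma>) y) (mat_morph_at lep (map f (E 1)) (map f (E 0)) (D 0) y) (\<epsilon> (g y))"
      using exact0 gQ by (simp add: pullback_def active_map mat_morph_at_map)
  next
    fix y j assume "y \<in> P"
    then show "exact_at (length (active lep (map f (E (Suc (Suc j)))) y))
        (length (active lep (map f (E (Suc j))) y)) (length (active lep (map f (E j)) y))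
        (mat_morph_at lep (map f (E (Suc (Suc j)))) (map f (E (Suc j))) (D (Suc j)) y)
        (mat_morph_at lep (map f (E (Suc j))) (map f (E j)) (D j) y)"
      using res gQ unfolding is_proj_res_iff by (simp add: active_map mat_morph_at_map)
  qed
qed

theorem corollary5p3:
  fixes P :: "'p set" and lep :: "'p \<Rightarrow> 'p \<Rightarrow> bool"
    and M N :: "('p, 'k::field) pmod"
  assumes "finite_poset P lep"
    and "is_pmod P lep M" and "is_pmod P lep N"
    and "galois_coupling_exists P lep M N"
  shows "Res P lep M N \<noteq> {}
    \<and> (\<exists>E DE F DF. ((E, DE), (F, DF)) \<in> Res P lep M N \<and> has_matching E DE F DF)"
proof -
  obtain Q :: "nat set" and leQ f g h i and \<Gamma> :: "(nat, 'k) pmod" where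
    Q: "finite_poset Q leQ" and fg: "galois_insertion Q leQ P lep f g"
    and hi: "galois_insertion Q leQ P lep h i" and \<Gamma>: "is_pmod Q leQ \<Gamma>"
    and M: "pmod_iso P lep (pullback g \<Gamma>) M" and N: "pmod_iso P lep (pullback i \<Gamma>) N"
    using assms(4) unfolding galois_coupling_exists_def by blast
  obtain E D where res: "is_proj_res Q leQ \<Gamma> E D" using proj_res_exists[OF Q \<Gamma>] by blast
  have "is_proj_res P lep M (\<lambda>n. map f (E n)) D"
    using fg \<Gamma> res is_pmod_pullback is_proj_res_pullback is_proj_res_iso[OF _ assms(2) M]
    unfolding galois_insertion_def by blast
  moreover have "is_proj_res P lep N (\<lambda>n. map h (E n)) D"
    using hi \<Gamma> res is_pmod_pullback is_proj_res_pullback is_proj_res_iso[OF _ assms(3) N]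
    unfolding galois_insertion_def by blast
  ultimately have "((\<lambda>n. map f (E n), D), (\<lambda>n. map h (E n), D)) \<in> Res P lep M N"
    unfolding Res_def by simp
  moreover have "has_matching (\<lambda>n. map f (E n)) D (\<lambda>n. map h (E n)) D"
    unfolding has_matching_def by (intro exI[of _ "\<lambda>_ j. j"]) (simp add: bij_betw_def)
  ultimately show ?thesis by blast
qed

end
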